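(* Let $\chi$ be a character of $E^\times$ of odd level $m=2n-1\ge1$, let $0\le\alpha<n$ and $s\in R_\alpha^{\langle\tau\rangle,\prime}$. There is a unique character $\chi_s$ of $F^\times U_E^{2\alpha+1}$ such that: (i) $\chi_s=\chi$ on $F^\times U_E^{m+1}$; (ii) if $\alpha<\lfloor n/2\rfloor$, then $\chi_s=\chi\circ\tau^i$ on $F^\times U_E^{2(2\alpha+1)}$, where $i\in\{0,1\}$ is such that $s\equiv(-1)^i\bmod u$; (iii) $\chi_s(1+u^{2\alpha+1}h)=\chi(1+u^{2\alpha+1}h\tilde s)$ for all $h\in\mathcal O_F$, where $\tilde s\in\mathcal O_F$ is any lift of $s$. Conversely, if $\theta$ is a character of $F^\times U_E^{2\alpha+1}$ which coincides with $\chi$ or with $\chi^\tau$ on $F^\times U_E^{\min\{m+1,2(2\alpha+1)\}}$, then there is a unique $s\in R_\alpha^{\langle\tau\rangle,\prime}$ with $\theta=\chi_s$.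
   Context: $k=\mathbb F_q$, $q$ odd, $F=k((t))$, $\mathcal O_F=k[[t]]$, $E=k((u))$, $u^2=t$, $U_E^j=1+u^jk[[u]]$; $\tau$ is the nontrivial automorphism of $E/F$ ($u\mapsto-u$), $\chi^\tau=\chi\circ\tau$; the level of $\chi$ is the least $j\ge0$ with $\chi|_{U_E^{j+1}}=1$. For $0\le\alpha<n$ (with $m=2n-1$) let $R_\alpha=k[u]/(u^{m-2\alpha})$ with $\tau$ acting by $u\mapsto -u$, $R_\alpha^{\langle\tau\rangle}=k[t]/(t^{n-\alpha})$ its $\tau$-invariants, and $R_\alpha^{\langle\tau\rangle,\prime}=\{s\in R_\alpha^{\langle\tau\rangle}: s\equiv\pm1\bmod u^{m+1-2(2\alpha+1)}\}$ (no condition if the exponent is $\le0$). *)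

theory Defs
  imports "HOL-Computational_Algebra.Formal_Laurent_Series" Complex_Main
begin

text \<open>E = k((u)) is modelled as the type 'k fls (u = fls_X); F = k((t)) with t = u^2 is
  the image of k((t)) under t \<mapsto> u^2 (fls_compose_power _ 2).\<close>

definition u_E :: "'k::field fls" where "u_E = fls_X"

definition tau :: "'k::field fls \<Rightarrow> 'k fls" where
  "tau x = fls_compose_fps x (- fps_X)"

definition O_E :: "'k::field fls set" where
  "O_E = range fps_to_fls"

definition F_field :: "'k::field fls set" where
  "F_field = {fls_compose_power g 2 | g. True}"

definition F_units :: "'k::field fls set" where
  "F_units = F_field - {0}"

definition O_F :: "'k::field fls set" where
  "O_F = {fls_compose_power (fps_to_fls p) 2 | p. True}"

definition U_E :: "nat \<Rightarrow> 'k::field fls set" where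
  "U_E j = {1 + u_E ^ j * h | h. h \<in> O_E}"

definition FU :: "nat \<Rightarrow> 'k::field fls set" where
  "FU j = {a * x | a x. a \<in> F_units \<and> x \<in> U_E j}"

definition is_character_on :: "'k::field fls set \<Rightarrow> ('k fls \<Rightarrow> complex) \<Rightarrow> bool" where
  "is_character_on H \<theta> \<longleftrightarrow>
     (\<forall>x\<in>H. \<theta> x \<noteq> 0) \<and> (\<forall>x\<in>H. \<forall>y\<in>H. \<theta> (x * y) = \<theta> x * \<theta> y)"

definition E_units :: "'k::field fls set" where
  "E_units = UNIV - {0}"

definition has_level :: "('k::field fls \<Rightarrow> complex) \<Rightarrow> nat \<Rightarrow> bool" where
  "has_level \<chi> j \<longleftrightarrow> j = (LEAST l. \<forall>x\<in>U_E (l + 1). \<chi> x = 1)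
      \<and> (\<forall>x\<in>U_E (j + 1). \<chi> x = 1)"

definition cong_u :: "'k::field fls \<Rightarrow> 'k fls \<Rightarrow> int \<Rightarrow> bool" where
  "cong_u x y j \<longleftrightarrow> (\<forall>i::int. i < j \<longrightarrow> fls_nth x i = fls_nth y i)"

text \<open>R_\<alpha> = k[u]/(u^{m-2\<alpha>}), represented by its canonical representatives:
  polynomials in u of degree < m - 2\<alpha>, viewed inside E; tau acts by u \<mapsto> -u.\<close>
definition R_alpha :: "nat \<Rightarrow> nat \<Rightarrow> 'k::field fls set" where
  "R_alpha m \<alpha> = {x. \<forall>i. fls_nth x i \<noteq> 0 \<longrightarrow> 0 \<le> i \<and> i < int m - 2 * int \<alpha>}"

definition R_alpha_tau :: "nat \<Rightarrow> nat \<Rightarrow> 'k::field fls set" where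
  "R_alpha_tau m \<alpha> = {s \<in> R_alpha m \<alpha>. tau s = s}"

definition R_alpha_tau' :: "nat \<Rightarrow> nat \<Rightarrow> 'k::field fls set" where
  "R_alpha_tau' m \<alpha> = {s \<in> R_alpha_tau m \<alpha>.
      let e = int m + 1 - 2 * (2 * int \<alpha> + 1) in
      e \<le> 0 \<or> cong_u s 1 e \<or> cong_u s (-1) e}"

definition is_lift :: "nat \<Rightarrow> nat \<Rightarrow> 'k::field fls \<Rightarrow> 'k fls \<Rightarrow> bool" where
  "is_lift m \<alpha> s s' \<longleftrightarrow> s' \<in> O_F \<and> cong_u s' s (int m - 2 * int \<alpha>)"

definition is_chi_s ::
  "('k::field fls \<Rightarrow> complex) \<Rightarrow> nat \<Rightarrow> nat \<Rightarrow> 'k fls \<Rightarrow> ('k fls \<Rightarrow> complex) \<Rightarrow> bool" where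
  "is_chi_s \<chi> n \<alpha> s \<theta> \<longleftrightarrow>
     (let m = 2 * n - 1 in
      is_character_on (FU (2 * \<alpha> + 1)) \<theta>
      \<and> (\<forall>x\<in>FU (m + 1). \<theta> x = \<chi> x)
      \<and> (\<alpha> < n div 2 \<longrightarrow>
           (\<forall>i::nat. i \<in> {0, 1} \<longrightarrow> fls_nth s 0 = (-1) ^ i \<longrightarrow>
              (\<forall>x\<in>FU (2 * (2 * \<alpha> + 1)). \<theta> x = \<chi> ((tau ^^ i) x))))
      \<and> (\<forall>h\<in>O_F. \<forall>s'. is_lift m \<alpha> s s' \<longrightarrow>
           \<theta> (1 + u_E ^ (2 * \<alpha> + 1) * h) = \<chi> (1 + u_E ^ (2 * \<alpha> + 1) * h * s')))"

end

theory Submission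
  imports Defs
begin

text \<open>Every \<open>x \<in> F\<^sup>\<times> U_E\<^sup>b\<close> (\<open>b = 2\<alpha> + 1\<close> odd) is uniquely \<open>a (1 + z)\<close> with \<open>a \<in> F\<^sup>\<times>\<close> and
  \<open>\<tau> z = -z\<close>, and \<open>\<chi>\<^sub>s(x) = \<chi>(a) \<chi>(1 + z s)\<close> is the required character: it is multiplicative
  because \<open>s\<^sup>2 \<equiv> 1\<close> modulo \<open>u\<^sup>2\<^sup>n\<^sup>-\<^sup>2\<^sup>b\<close> and \<open>\<chi>\<close> is trivial on \<open>U_E\<^sup>2\<^sup>n\<close>, and it is unique because
  \<open>F\<^sup>\<times>\<close> and \<open>1 + u\<^sup>b O_F\<close> generate \<open>F\<^sup>\<times> U_E\<^sup>b\<close>. The nontrivial additive character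
  \<open>\<psi>(c) = \<chi>(1 + c u\<^sup>m)\<close> of \<open>k\<close> drives the rest. Conversely, starting from \<open>s = \<plusminus>1\<close>, the level of
  agreement between \<open>\<theta>\<close> and \<open>\<chi>\<^sub>s\<close> is lowered two steps at a time: on the layer
  \<open>1 + k u\<^sup>L\<close> the quotient \<open>\<theta>/\<chi>\<^sub>s\<close> is an additive character of \<open>k\<close>, hence \<open>c \<mapsto> \<psi>(e c)\<close>,
  and replacing \<open>s\<close> by \<open>s + e u\<^sup>m\<^sup>-\<^sup>L\<close> absorbs it. Since \<open>\<psi> \<noteq> 1\<close>, \<open>\<chi>\<^sub>s\<close> also determines \<open>s\<close>.\<close>

unbundle fps_syntax

lemma even_card_if_involution_without_fixpoints:
  assumes "finite A" "\<forall>x\<in>A. f x \<in> A \<and> f x \<noteq> x \<and> f (f x) = x"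
  shows "even (card A)"
  using assms
proof (induction "card A" arbitrary: A rule: less_induct)
  case less
  show ?case
  proof (cases "A = {}")
    case False
    then obtain x where x: "x \<in> A" by blast
    define A' where "A' = A - {x, f x}"
    have fx: "f x \<in> A" "f x \<noteq> x" using less.prems x by auto
    have card_A: "card A = card A' + 2"
      using less.prems(1) x fx card_mono[of A "{x, f x}"]
      by (simp add: A'_def card_Diff_subset)
    have "even (card A')"
    proof (rule less.hyps)
      show "card A' < card A" "finite A'" using card_A less.prems(1) by (simp_all add: A'_def)
      show "\<forall>y\<in>A'. f y \<in> A' \<and> f y \<noteq> y \<and> f (f y) = y"
        using less.prems(2) x unfolding A'_def by auto (metis)
    qed
    then show ?thesis using card_A by simp
  qed simp
qed

lemma two_neq_zero_if_odd_card:
  assumes "odd (card (UNIV :: 'k::{field,finite} set))"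
  shows "(2::'k) \<noteq> 0"
proof
  assume two: "(2::'k) = 0"
  have "\<forall>x\<in>UNIV. x + 1 \<in> UNIV \<and> x + 1 \<noteq> x \<and> x + 1 + 1 = (x::'k)"
    using two by (simp add: add.assoc one_add_one)
  then have "even (card (UNIV :: 'k set))"
    by (rule even_card_if_involution_without_fixpoints[OF finite_UNIV])
  with assms show False by simp
qed

section \<open>The ideals \<open>u\<^sup>j O_E\<close> and the involution \<open>tau\<close>\<close>

definition u_ideal :: "int \<Rightarrow> 'k::field fls set" where
  "u_ideal j = {x. \<forall>i<j. x $$ i = 0}"

lemma zero_in_u_ideal [simp]: "0 \<in> u_ideal j"
  by (simp add: u_ideal_def)

lemma u_ideal_add: "x \<in> u_ideal j \<Longrightarrow> y \<in> u_ideal j \<Longrightarrow> x + y \<in> u_ideal j"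
  by (simp add: u_ideal_def)

lemma u_ideal_diff: "x \<in> u_ideal j \<Longrightarrow> y \<in> u_ideal j \<Longrightarrow> x - y \<in> u_ideal j"
  by (simp add: u_ideal_def)

lemma uminus_in_u_ideal_iff [simp]: "- x \<in> u_ideal j \<longleftrightarrow> x \<in> u_ideal j"
  by (simp add: u_ideal_def)

lemma u_ideal_mono: "i \<le> j \<Longrightarrow> x \<in> u_ideal j \<Longrightarrow> x \<in> u_ideal i"
  by (simp add: u_ideal_def)

lemma u_ideal_mult:
  assumes "x \<in> u_ideal i" "y \<in> u_ideal j"
  shows "x * y \<in> u_ideal (i + j)"
proof (cases "x = 0 \<or> y = 0")
  case False
  then have "i \<le> fls_subdegree x" "j \<le> fls_subdegree y"
    using assms by (auto intro!: fls_subdegree_geI simp: u_ideal_def)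
  then show ?thesis unfolding u_ideal_def by (auto intro!: fls_times_nth_eq0)
qed auto

lemma fls_const_in_u_ideal [simp]: "fls_const c \<in> u_ideal 0"
  by (simp add: u_ideal_def)

lemma one_in_u_ideal [simp]: "1 \<in> u_ideal 0"
  by (simp add: u_ideal_def)

lemma u_E_power_in_u_ideal: "u_E ^ k \<in> u_ideal (int k)"
  by (simp add: u_ideal_def u_E_def)

lemma u_E_power_mult_in_u_ideal: "h \<in> u_ideal 0 \<Longrightarrow> u_E ^ k * h \<in> u_ideal (int k)"
  using u_ideal_mult[OF u_E_power_in_u_ideal, of h 0 k] by simp

lemma fls_const_mult_in_u_ideal: "y \<in> u_ideal j \<Longrightarrow> fls_const c * y \<in> u_ideal j"
  using u_ideal_mult[of "fls_const c" 0 y j] by simp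

lemma u_ideal_sub_leading_term:
  assumes "x \<in> u_ideal (int k)"
  shows "x - fls_const (x $$ int k) * u_E ^ k \<in> u_ideal (int k + 1)"
  using assms by (auto simp: u_ideal_def u_E_def)

lemma O_E_eq_u_ideal: "O_E = u_ideal 0"
proof (intro set_eqI iffI)
  fix x :: "'a fls"
  assume "x \<in> u_ideal 0"
  then have "0 \<le> fls_subdegree x" by (intro fls_subdegree_ge0I) (auto simp: u_ideal_def)
  then have "x = fps_to_fls (fls_regpart x)" by simp
  then show "x \<in> O_E" unfolding O_E_def by blast
qed (auto simp: O_E_def u_ideal_def)

lemma O_F_subset_u_ideal: "O_F \<subseteq> u_ideal 0"
  by (auto simp: O_F_def u_ideal_def fls_nth_compose_power)

lemma U_E_iff_u_ideal: "x \<in> U_E j \<longleftrightarrow> x - 1 \<in> u_ideal (int j)"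
proof
  assume "x \<in> U_E j"
  then obtain h where "h \<in> u_ideal 0" "x = 1 + u_E ^ j * h"
    by (auto simp: U_E_def O_E_eq_u_ideal)
  then show "x - 1 \<in> u_ideal (int j)" using u_ideal_mult[OF u_E_power_in_u_ideal[of j], of h 0] by simp
next
  assume x: "x - 1 \<in> u_ideal (int j)"
  define h where "h = fls_shift (int j) (x - 1)"
  have "h \<in> u_ideal 0" using x by (auto simp: u_ideal_def h_def)
  moreover have "u_E ^ j * h = x - 1" by (simp add: h_def u_E_def fls_X_power_times_conv_shift)
  ultimately show "x \<in> U_E j" unfolding U_E_def O_E_eq_u_ideal by (auto intro!: exI[of _ h])
qed

lemma cong_u_iff_u_ideal: "cong_u x y j \<longleftrightarrow> x - y \<in> u_ideal j"
  by (simp add: cong_u_def u_ideal_def)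

lemma principal_unit_in_O_E: "y - 1 \<in> u_ideal 1 \<Longrightarrow> y \<in> u_ideal 0"
  using u_ideal_add[of "y - 1" 0 1] by (auto simp: u_ideal_def)

lemma principal_unit_nth_0: "y - 1 \<in> u_ideal 1 \<Longrightarrow> y $$ 0 = 1"
  by (auto simp: u_ideal_def)

lemma principal_unit_neq_zero: "y - 1 \<in> u_ideal 1 \<Longrightarrow> y \<noteq> 0"
  using principal_unit_nth_0[of y] by auto

lemma principal_unit_inverse:
  assumes "y - 1 \<in> u_ideal 1"
  shows "inverse y \<in> u_ideal 0" "inverse y - 1 \<in> u_ideal 1"
proof -
  have y: "y $$ 0 = 1" "y \<noteq> 0" using assms principal_unit_nth_0 principal_unit_neq_zero by auto
  have "fls_subdegree y = 0"
    using y principal_unit_in_O_E[OF assms] by (intro fls_subdegree_eqI) (auto simp: u_ideal_def)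
  then show inv_y: "inverse y \<in> u_ideal 0" by (auto simp: u_ideal_def)
  have "inverse y - 1 = - ((y - 1) * inverse y)" using y by (simp add: algebra_simps)
  then show "inverse y - 1 \<in> u_ideal 1" using u_ideal_mult[OF assms inv_y] by simp
qed

lemma principal_unit_mult:
  assumes "x - 1 \<in> u_ideal 1" "y - 1 \<in> u_ideal 1"
  shows "x * y - 1 \<in> u_ideal 1"
proof -
  have "x * y - 1 = (x - 1) * y + (y - 1)" by (simp add: algebra_simps)
  moreover have "(x - 1) * y \<in> u_ideal 1"
    using u_ideal_mult[OF assms(1) principal_unit_in_O_E[OF assms(2)]] by simp
  ultimately show ?thesis using u_ideal_add assms(2) by metis
qed

lemma one_plus_principal: "z \<in> u_ideal j \<Longrightarrow> 1 \<le> j \<Longrightarrow> (1 + z) - 1 \<in> u_ideal 1"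
  by (simp add: u_ideal_mono[of 1 j])

lemma one_plus_mult_principal:
  "z \<in> u_ideal (int b) \<Longrightarrow> 1 \<le> b \<Longrightarrow> s \<in> u_ideal 0 \<Longrightarrow> (1 + z * s) - 1 \<in> u_ideal 1"
  using u_ideal_mult[of z "int b" s 0] u_ideal_mono[of 1 "int b"] by simp

lemma fps_compose_uminus_X_nth: "(f oo - fps_X) $ k = (-1) ^ k * f $ k"
  for f :: "'k::field fps"
proof -
  have p: "(- fps_X :: 'k fps) ^ i = fps_const ((-1) ^ i) * fps_X ^ i" for i
    by (induction i) (simp_all add: algebra_simps flip: fps_const_neg)
  have "(f oo - fps_X) $ k = (\<Sum>i\<in>{0..k}. f $ i * ((- fps_X) ^ i $ k))"
    by (simp add: fps_compose_nth)
  also have "\<dots> = (\<Sum>i\<in>{k}. f $ i * ((- fps_X) ^ i $ k))"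
    by (intro sum.mono_neutral_right) (auto simp: p)
  finally show ?thesis by (simp add: p)
qed

lemma uminus_fls_X_power_int:
  "(- fls_X :: 'k::field fls) powi d = fls_const ((-1) powi d) * fls_shift (-d) 1"
proof -
  have "(fls_X :: 'k fls) powi d = fls_shift (-d) 1"
  proof (cases "d \<ge> 0")
    case True
    then show ?thesis unfolding power_int_def by (simp add: fls_X_power_conv_shift_1)
  next
    case False
    then have "(fls_X :: 'k fls) powi d = inverse (fls_shift (- int (nat (-d))) 1)"
      unfolding power_int_def by (simp add: power_inverse fls_X_power_conv_shift_1)
    also have "\<dots> = fls_shift (-d) 1" using False fls_inverse_X_intpow[of "- d", where 'a='k] by simp
    finally show ?thesis .
  qed
  moreover have "(- fls_X :: 'k fls) = fls_const (-1) * fls_X" by simp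
  ultimately show ?thesis by (simp only: power_int_mult_distrib fls_const_power_int)
qed

lemma tau_nth_power_int: "tau (x :: 'k::field fls) $$ i = (-1) powi i * x $$ i"
proof (cases "x = 0")
  case False
  define d where "d = fls_subdegree x"
  define b where "b = fls_base_factor_to_fps x"
  have tau_x: "tau x = (fps_to_fls (b oo - fps_X) * fls_const ((-1) powi d)) * fls_shift (-d) 1"
    unfolding tau_def fls_compose_fps_def b_def d_def
    by (simp add: uminus_fls_X_power_int fps_X_to_fls mult_ac)
  have "tau x $$ i = (fps_to_fls (b oo - fps_X) * fls_const ((-1) powi d)) $$ (i - d)"
    unfolding tau_x by (simp add: fls_X_intpow_times_conv_shift)
  also have "\<dots> = (-1) powi i * x $$ i"
  proof (cases "i < d")
    case False
    then obtain k where k: "i = d + int k" by (metis le_Suc_ex zle_iff_zadd not_less)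
    then have "(-1) powi i = (-1) powi d * ((-1) ^ k :: 'k)" by (simp add: power_int_add)
    then show ?thesis
      using k by (simp add: fps_compose_uminus_X_nth b_def d_def fls_base_factor_to_fps_nth add.commute)
  qed (simp add: d_def)
  finally show ?thesis .
qed (simp add: tau_def)

lemma tau_nth: "tau (x :: 'k::field fls) $$ i = (if even i then x $$ i else - x $$ i)"
  by (simp add: tau_nth_power_int power_int_minus_left)

lemma tau_add: "tau (x + y) = tau x + tau (y :: 'k::field fls)"
  by (rule fls_eqI) (simp add: tau_nth)

lemma tau_diff: "tau (x - y) = tau x - tau (y :: 'k::field fls)"
  by (rule fls_eqI) (simp add: tau_nth)

lemma tau_mult: "tau (x * y) = tau x * tau (y :: 'k::field fls)"
  unfolding tau_def by (rule fls_compose_fps_mult) auto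

lemma tau_inverse: "tau (inverse x) = inverse (tau (x :: 'k::field fls))"
  unfolding tau_def by (rule fls_compose_fps_inverse) auto

lemma tau_fls_const [simp]: "tau (fls_const c) = (fls_const c :: 'k::field fls)"
  by (simp add: tau_def)

lemma tau_one [simp]: "tau 1 = (1 :: 'k::field fls)"
  by (simp add: tau_def)

lemma tau_tau [simp]: "tau (tau x) = (x :: 'k::field fls)"
  by (rule fls_eqI) (simp add: tau_nth)

lemma tau_power: "tau (x ^ k) = tau (x :: 'k::field fls) ^ k"
  by (induction k) (simp_all add: tau_mult)

lemma tau_u_E: "tau u_E = - (u_E :: 'k::field fls)"
  by (rule fls_eqI) (simp add: tau_nth u_E_def)

lemma tau_u_E_power_even: "even k \<Longrightarrow> tau ((u_E :: 'k::field fls) ^ k) = u_E ^ k"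
  by (simp add: tau_power tau_u_E)

lemma tau_u_E_power_odd: "odd k \<Longrightarrow> tau ((u_E :: 'k::field fls) ^ k) = - (u_E ^ k)"
  by (simp add: tau_power tau_u_E)

context
  fixes x :: "'k::field fls"
  assumes two_neq_zero: "(2::'k) \<noteq> 0"
begin

lemma eq_uminus_self_iff: "(a :: 'k) = - a \<longleftrightarrow> a = 0"
  using two_neq_zero by (simp add: eq_neg_iff_add_eq_0 flip: mult_2)

lemma tau_eq_iff_odd_nth_eq_0: "tau x = x \<longleftrightarrow> (\<forall>i. odd i \<longrightarrow> x $$ i = 0)"
  using eq_uminus_self_iff by (auto simp: fls_eq_iff tau_nth)

lemma tau_eq_uminus_iff_even_nth_eq_0: "tau x = - x \<longleftrightarrow> (\<forall>i. even i \<longrightarrow> x $$ i = 0)"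
  using eq_uminus_self_iff by (auto simp: fls_eq_iff tau_nth)

lemma tau_fixed_in_u_ideal_Suc:
  assumes "tau x = x" "x \<in> u_ideal (2 * k + 1)"
  shows "x \<in> u_ideal (2 * k + 2)"
proof -
  have top: "x $$ (2 * k + 1) = 0" using assms(1) tau_eq_iff_odd_nth_eq_0 by simp
  show ?thesis unfolding u_ideal_def
  proof (intro CollectI allI impI)
    fix i assume "i < 2 * k + 2"
    then consider "i < 2 * k + 1" | "i = 2 * k + 1" by linarith
    then show "x $$ i = 0" using assms(2) top by cases (auto simp: u_ideal_def)
  qed
qed

lemma tau_anti_in_u_ideal_Suc:
  assumes "tau x = - x" "x \<in> u_ideal (2 * k)"
  shows "x \<in> u_ideal (2 * k + 1)"
proof -
  have top: "x $$ (2 * k) = 0" using assms(1) tau_eq_uminus_iff_even_nth_eq_0 by simp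
  show ?thesis unfolding u_ideal_def
  proof (intro CollectI allI impI)
    fix i assume "i < 2 * k + 1"
    then consider "i < 2 * k" | "i = 2 * k" by linarith
    then show "x $$ i = 0" using assms(2) top by cases (auto simp: u_ideal_def)
  qed
qed

end


lift_definition fls_even_coeffs :: "'a::zero fls \<Rightarrow> 'a fls" is "\<lambda>f n. f (2 * n)"
proof -
  fix f :: "int \<Rightarrow> 'a"
  assume "\<forall>\<^sub>\<infinity>n::nat. f (- int n) = 0"
  then have "finite {n::nat. f (- int n) \<noteq> 0}" by (simp add: eventually_cofinite)
  then have "finite ((\<lambda>n::nat. 2 * n) -` {n::nat. f (- int n) \<noteq> 0})"
    by (rule finite_vimageI) (auto simp: inj_on_def)
  moreover have "{n::nat. f (2 * - int n) \<noteq> 0} \<subseteq> (\<lambda>n. 2 * n) -` {n::nat. f (- int n) \<noteq> 0}"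
    by auto
  ultimately have "finite {n::nat. f (2 * - int n) \<noteq> 0}" by (rule finite_subset[rotated])
  then show "\<forall>\<^sub>\<infinity>n::nat. f (2 * - int n) = 0" by (simp add: eventually_cofinite)
qed

lemma fls_even_coeffs_nth [simp]: "fls_even_coeffs x $$ n = x $$ (2 * n)"
  by transfer simp

lemma fls_compose_power_even_coeffs:
  "(\<forall>i. odd i \<longrightarrow> x $$ i = 0) \<Longrightarrow> fls_compose_power (fls_even_coeffs x) 2 = x"
  by (intro fls_eqI) (auto simp: fls_nth_compose_power)

context
  assumes two_neq_zero: "(2::'k::field) \<noteq> 0"
begin

lemma F_field_iff_tau_fixed: "(x :: 'k fls) \<in> F_field \<longleftrightarrow> tau x = x"
proof
  assume "x \<in> F_field"
  then obtain g where "x = fls_compose_power g 2" by (auto simp: F_field_def)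
  then show "tau x = x"
    using tau_eq_iff_odd_nth_eq_0[OF two_neq_zero] by (auto simp: fls_nth_compose_power)
next
  assume "tau x = x"
  then have "x = fls_compose_power (fls_even_coeffs x) 2"
    using tau_eq_iff_odd_nth_eq_0[OF two_neq_zero] by (simp add: fls_compose_power_even_coeffs)
  then show "x \<in> F_field" by (auto simp: F_field_def)
qed

lemma F_units_iff_tau_fixed: "(x :: 'k fls) \<in> F_units \<longleftrightarrow> x \<noteq> 0 \<and> tau x = x"
  using F_field_iff_tau_fixed by (auto simp: F_units_def)

lemma O_F_iff_tau_fixed: "(x :: 'k fls) \<in> O_F \<longleftrightarrow> x \<in> u_ideal 0 \<and> tau x = x"
proof
  assume "x \<in> O_F"
  then obtain p where p: "x = fls_compose_power (fps_to_fls p) 2" by (auto simp: O_F_def)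
  then have "x \<in> F_field" by (auto simp: F_field_def)
  moreover have "x \<in> u_ideal 0" unfolding p u_ideal_def by (auto simp: fls_nth_compose_power)
  ultimately show "x \<in> u_ideal 0 \<and> tau x = x" using F_field_iff_tau_fixed by blast
next
  assume x: "x \<in> u_ideal 0 \<and> tau x = x"
  then have "fls_even_coeffs x \<in> O_E" by (auto simp: u_ideal_def O_E_eq_u_ideal)
  then obtain p where "fls_even_coeffs x = fps_to_fls p" by (auto simp: O_E_def)
  then have "x = fls_compose_power (fps_to_fls p) 2"
    using x tau_eq_iff_odd_nth_eq_0[OF two_neq_zero] fls_compose_power_even_coeffs by metis
  then show "x \<in> O_F" by (auto simp: O_F_def)
qed

lemma fls_const_mult_u_E_even_power_in_O_F:
  assumes "even k"
  shows "fls_const c * u_E ^ k \<in> (O_F :: 'k fls set)"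
proof -
  have "fls_const c * u_E ^ k \<in> (u_ideal (int k) :: 'k fls set)"
    by (rule fls_const_mult_in_u_ideal[OF u_E_power_in_u_ideal])
  then have "fls_const c * u_E ^ k \<in> (u_ideal 0 :: 'k fls set)" by (rule u_ideal_mono[rotated]) simp
  then show ?thesis using assms by (simp add: O_F_iff_tau_fixed tau_mult tau_u_E_power_even)
qed

lemma tau_anti_eq_u_E_power_mult:
  assumes "tau z = - (z :: 'k fls)" "z \<in> u_ideal (int b)" "odd b"
  shows "fls_shift (int b) z \<in> O_F" "z = u_E ^ b * fls_shift (int b) z"
proof -
  have "\<forall>i. odd i \<longrightarrow> fls_shift (int b) z $$ i = 0"
    using assms(1,3) tau_eq_uminus_iff_even_nth_eq_0[OF two_neq_zero] by simp
  then have "tau (fls_shift (int b) z) = fls_shift (int b) z"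
    using tau_eq_iff_odd_nth_eq_0[OF two_neq_zero] by blast
  moreover have "fls_shift (int b) z \<in> u_ideal 0" using assms(2) by (auto simp: u_ideal_def)
  ultimately show "fls_shift (int b) z \<in> O_F" by (simp add: O_F_iff_tau_fixed)
  show "z = u_E ^ b * fls_shift (int b) z" by (simp add: u_E_def fls_X_power_times_conv_shift)
qed

end

lemma sum_additive_character_eq_0:
  fixes psi :: "'a::{ab_group_add,finite} \<Rightarrow> complex"
  assumes add: "\<And>a b. psi (a + b) = psi a * psi b" and nontrivial: "psi c \<noteq> 1"
  shows "(\<Sum>a\<in>UNIV. psi a) = 0"
proof -
  have "(\<Sum>a\<in>UNIV. psi a) = (\<Sum>a\<in>UNIV. psi (c + a))"
    by (rule sum.reindex_bij_witness[where j="\<lambda>a. a - c" and i="\<lambda>a. c + a"]) auto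
  also have "\<dots> = psi c * (\<Sum>a\<in>UNIV. psi a)" by (simp add: add sum_distrib_left)
  finally have "(1 - psi c) * (\<Sum>a\<in>UNIV. psi a) = 0" by (simp add: algebra_simps)
  then show ?thesis using nontrivial by simp
qed

definition layer_unit :: "nat \<Rightarrow> 'k::field \<Rightarrow> 'k fls" where
  "layer_unit L c = 1 + fls_const c * u_E ^ L"

lemma layer_unit_minus_one: "layer_unit L c - 1 \<in> u_ideal (int L)"
  by (simp add: layer_unit_def fls_const_mult_in_u_ideal[OF u_E_power_in_u_ideal])

lemma layer_unit_principal: "1 \<le> L \<Longrightarrow> layer_unit L c - 1 \<in> u_ideal 1"
  using u_ideal_mono[OF _ layer_unit_minus_one, of 1 L c] by simp

lemma layer_unit_neq_zero: "1 \<le> L \<Longrightarrow> layer_unit L c \<noteq> 0"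
  using principal_unit_neq_zero[OF layer_unit_principal] .

section \<open>Characters of level \<open>2n - 1\<close>\<close>

locale odd_level_character =
  fixes chi :: "'k::{field,finite} fls \<Rightarrow> complex" and n :: nat
  assumes two_neq_zero: "(2::'k) \<noteq> 0"
    and character: "is_character_on E_units chi"
    and n_pos: "1 \<le> n"
    and level: "has_level chi (2 * n - 1)"
begin

lemmas F_units_iff = F_units_iff_tau_fixed[OF two_neq_zero]
lemmas O_F_iff = O_F_iff_tau_fixed[OF two_neq_zero]

lemma chi_mult: "x \<noteq> 0 \<Longrightarrow> y \<noteq> 0 \<Longrightarrow> chi (x * y) = chi x * chi y"
  using character by (auto simp: is_character_on_def E_units_def)

lemma chi_neq_zero: "x \<noteq> 0 \<Longrightarrow> chi x \<noteq> 0"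
  using character by (auto simp: is_character_on_def E_units_def)

lemma chi_one [simp]: "chi 1 = 1"
  using chi_mult[of 1 1] chi_neq_zero[of 1] by simp

lemma chi_eq_1: "x - 1 \<in> u_ideal (int (2 * n)) \<Longrightarrow> chi x = 1"
  using level n_pos by (auto simp: has_level_def U_E_iff_u_ideal)

lemma chi_eq_if_congruent:
  assumes x: "x - 1 \<in> u_ideal 1" and y: "y - 1 \<in> u_ideal 1"
    and xy: "x - y \<in> u_ideal (int (2 * n))"
  shows "chi x = chi y"
proof -
  have y_neq_0: "y \<noteq> 0" using principal_unit_neq_zero[OF y] .
  have "x * inverse y - 1 = (x - y) * inverse y" using y_neq_0 by (simp add: algebra_simps)
  also have "\<dots> \<in> u_ideal (int (2 * n))"
    using u_ideal_mult[OF xy principal_unit_inverse(1)[OF y]] by simp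
  finally have chi_quotient: "chi (x * inverse y) = 1" by (rule chi_eq_1)
  have "x * inverse y \<noteq> 0" using principal_unit_neq_zero[OF x] y_neq_0 by simp
  then have "chi (y * (x * inverse y)) = chi y" using chi_mult[OF y_neq_0] chi_quotient by simp
  moreover have "y * (x * inverse y) = x" using y_neq_0 by (simp add: field_simps)
  ultimately show ?thesis by simp
qed

definition psi :: "'k \<Rightarrow> complex" where
  "psi c = chi (layer_unit (2 * n - 1) c)"

lemma psi_neq_zero: "psi c \<noteq> 0"
  unfolding psi_def using n_pos by (intro chi_neq_zero layer_unit_neq_zero) simp

lemma psi_0 [simp]: "psi 0 = 1"
  by (simp add: psi_def layer_unit_def)

lemma psi_add: "psi (a + b) = psi a * psi b"
proof -
  let ?m = "2 * n - 1"
  have m: "1 \<le> ?m" using n_pos by simp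
  have "psi a * psi b = chi (layer_unit ?m a * layer_unit ?m b)"
    unfolding psi_def using m by (intro chi_mult[symmetric] layer_unit_neq_zero)
  also have "\<dots> = psi (a + b)" unfolding psi_def
  proof (rule chi_eq_if_congruent)
    show "layer_unit ?m a * layer_unit ?m b - 1 \<in> u_ideal 1"
      using m by (intro principal_unit_mult layer_unit_principal)
    show "layer_unit ?m (a + b) - 1 \<in> u_ideal 1" using m by (rule layer_unit_principal)
    have "layer_unit ?m a * layer_unit ?m b - layer_unit ?m (a + b)
        = (layer_unit ?m a - 1) * (layer_unit ?m b - 1)"
      by (simp add: layer_unit_def algebra_simps flip: fls_plus_const)
    also have "\<dots> \<in> u_ideal (int ?m + int ?m)" by (intro u_ideal_mult layer_unit_minus_one)
    finally show "layer_unit ?m a * layer_unit ?m b - layer_unit ?m (a + b) \<in> u_ideal (int (2 * n))"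
      by (rule u_ideal_mono[rotated]) (use n_pos in simp)
  qed
  finally show ?thesis by simp
qed

lemma psi_nontrivial: "\<exists>c. psi c \<noteq> 1"
proof -
  have "\<not> (\<forall>x\<in>U_E (2 * n - 2 + 1). chi x = 1)"
  proof
    assume "\<forall>x\<in>U_E (2 * n - 2 + 1). chi x = 1"
    then have "(LEAST l. \<forall>x\<in>U_E (l + 1). chi x = 1) \<le> 2 * n - 2" by (rule Least_le)
    then show False using level n_pos by (simp add: has_level_def; linarith)
  qed
  moreover have "2 * n - 2 + 1 = 2 * n - 1" using n_pos by simp
  ultimately obtain x where x: "x - 1 \<in> u_ideal (int (2 * n - 1))" "chi x \<noteq> 1"
    by (auto simp: U_E_iff_u_ideal)
  define y where "y = fls_shift (int (2 * n - 1)) (x - 1)"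
  have y: "y \<in> u_ideal 0" using x(1) by (auto simp: y_def u_ideal_def)
  have x_eq: "x - 1 = u_E ^ (2 * n - 1) * y"
    by (simp add: y_def u_E_def fls_X_power_times_conv_shift)
  have "chi x = psi (y $$ 0)" unfolding psi_def
  proof (rule chi_eq_if_congruent)
    show "x - 1 \<in> u_ideal 1" using u_ideal_mono[OF _ x(1)] n_pos by simp
    show "layer_unit (2 * n - 1) (y $$ 0) - 1 \<in> u_ideal 1" using n_pos by (intro layer_unit_principal) simp
    have "x - layer_unit (2 * n - 1) (y $$ 0) = u_E ^ (2 * n - 1) * (y - fls_const (y $$ 0))"
      using x_eq by (simp add: layer_unit_def algebra_simps)
    also have "\<dots> \<in> u_ideal (int (2 * n - 1) + 1)"
      using u_ideal_sub_leading_term[of y 0] y by (intro u_ideal_mult u_E_power_in_u_ideal) simp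
    finally show "x - layer_unit (2 * n - 1) (y $$ 0) \<in> u_ideal (int (2 * n))" using n_pos by simp
  qed
  then show ?thesis using x(2) by auto
qed

text \<open>Every additive character of the residue field is \<open>c \<mapsto> psi (b * c)\<close>: the characters
  \<open>c \<mapsto> psi (b * c)\<close> are pairwise orthogonal, and \<open>D\<close> would be orthogonal to all of them.\<close>

lemma additive_character_eq_psi_scaled:
  assumes add: "\<And>a b. D (a + b) = D a * D b" and D_neq_0: "\<And>a. D a \<noteq> 0"
  shows "\<exists>b. \<forall>c. D c = psi (b * c)"
proof (rule ccontr)
  assume not_psi: "\<not> ?thesis"
  obtain w where w: "psi w \<noteq> 1" using psi_nontrivial by blast
  have D_0: "D 0 = 1" using add[of 0 0] D_neq_0[of 0] by simp
  have sum_D: "(\<Sum>c\<in>UNIV. D c * inverse (psi (b * c))) = 0" for b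
  proof -
    obtain c where c: "D c \<noteq> psi (b * c)" using not_psi by blast
    show ?thesis
    proof (rule sum_additive_character_eq_0[where c=c])
      show "D (x + y) * inverse (psi (b * (x + y)))
          = D x * inverse (psi (b * x)) * (D y * inverse (psi (b * y)))" for x y
        by (simp add: add distrib_left psi_add)
      show "D c * inverse (psi (b * c)) \<noteq> 1" using c psi_neq_zero[of "b * c"] by (auto simp: field_simps)
    qed
  qed
  have sum_psi: "(\<Sum>b\<in>UNIV. inverse (psi (b * c))) = 0" if "c \<noteq> 0" for c
  proof (rule sum_additive_character_eq_0[where c="w / c"])
    show "inverse (psi ((x + y) * c)) = inverse (psi (x * c)) * inverse (psi (y * c))" for x y
      by (simp add: distrib_right psi_add)
    show "inverse (psi (w / c * c)) \<noteq> 1" using that w psi_neq_zero[of w] by (auto simp: field_simps)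
  qed
  have "0 = (\<Sum>b\<in>UNIV. \<Sum>c\<in>UNIV. D c * inverse (psi (b * c)))" using sum_D by simp
  also have "\<dots> = (\<Sum>c\<in>UNIV. D c * (\<Sum>b\<in>UNIV. inverse (psi (b * c))))"
    by (subst sum.swap) (simp add: sum_distrib_left)
  also have "\<dots> = (\<Sum>c\<in>{0}. D c * (\<Sum>b\<in>UNIV. inverse (psi (b * c))))"
    by (rule sum.mono_neutral_right) (auto simp: sum_psi)
  also have "\<dots> = of_nat (card (UNIV :: 'k set))" by (simp add: D_0)
  finally show False by simp
qed

lemma chi_add_top_term:
  assumes A: "A \<in> u_ideal 1"
  shows "chi (1 + A + fls_const c * u_E ^ (2 * n - 1)) = chi (1 + A) * psi c"
proof -
  let ?W = "fls_const c * u_E ^ (2 * n - 1)"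
  have m: "1 \<le> 2 * n - 1" using n_pos by simp
  have W: "?W \<in> u_ideal (int (2 * n - 1))" by (rule fls_const_mult_in_u_ideal[OF u_E_power_in_u_ideal])
  have "chi (1 + A + ?W) = chi ((1 + A) * layer_unit (2 * n - 1) c)"
  proof (rule chi_eq_if_congruent)
    show "1 + A + ?W - 1 \<in> u_ideal 1" using u_ideal_add[OF A u_ideal_mono[OF _ W]] m by simp
    show "(1 + A) * layer_unit (2 * n - 1) c - 1 \<in> u_ideal 1"
      using principal_unit_mult[of "1 + A", OF _ layer_unit_principal[OF m]] A by simp
    have "1 + A + ?W - (1 + A) * layer_unit (2 * n - 1) c = - (A * ?W)"
      by (simp add: layer_unit_def algebra_simps)
    moreover have "A * ?W \<in> u_ideal (1 + int (2 * n - 1))" by (rule u_ideal_mult[OF A W])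
    ultimately show "1 + A + ?W - (1 + A) * layer_unit (2 * n - 1) c \<in> u_ideal (int (2 * n))"
      using n_pos by simp
  qed
  also have "\<dots> = chi (1 + A) * psi c" unfolding psi_def
    by (intro chi_mult layer_unit_neq_zero[OF m] principal_unit_neq_zero) (simp add: A)
  finally show ?thesis .
qed

section \<open>The characters \<open>\<chi>\<^sub>s\<close>\<close>

lemma F_units_mult: "(a :: 'k fls) \<in> F_units \<Longrightarrow> b \<in> F_units \<Longrightarrow> a * b \<in> F_units"
  by (simp add: F_units_iff tau_mult)

lemma FU_iff: "(x :: 'k fls) \<in> FU K \<longleftrightarrow> (\<exists>a v. a \<in> F_units \<and> v \<in> u_ideal (int K) \<and> x = a * (1 + v))"
proof
  assume "x \<in> FU K"
  then obtain a y where "a \<in> F_units" "y - 1 \<in> u_ideal (int K)" "x = a * (1 + (y - 1))"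
    unfolding FU_def U_E_iff_u_ideal by auto
  then show "\<exists>a v. a \<in> F_units \<and> v \<in> u_ideal (int K) \<and> x = a * (1 + v)" by blast
next
  assume "\<exists>a v. a \<in> F_units \<and> v \<in> u_ideal (int K) \<and> x = a * (1 + v)"
  then obtain a v where "a \<in> F_units" "v \<in> u_ideal (int K)" "x = a * (1 + v)" by blast
  then show "x \<in> FU K" unfolding FU_def U_E_iff_u_ideal by force
qed

lemma mult_in_FU: "(a :: 'k fls) \<in> F_units \<Longrightarrow> v \<in> u_ideal (int K) \<Longrightarrow> a * (1 + v) \<in> FU K"
  unfolding FU_iff by blast

lemma F_units_in_FU: "(a :: 'k fls) \<in> F_units \<Longrightarrow> a \<in> FU K"
  using mult_in_FU[of a 0 K] by simp

lemma one_plus_in_FU: "(v :: 'k fls) \<in> u_ideal (int K) \<Longrightarrow> 1 + v \<in> FU K"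
  using mult_in_FU[of 1 v K] by (simp add: F_units_iff)

lemma FU_mono: "K \<le> K' \<Longrightarrow> (x :: 'k fls) \<in> FU K' \<Longrightarrow> x \<in> FU K"
  using u_ideal_mono[of "int K" "int K'"] unfolding FU_iff by fastforce

lemma FU_mult:
  assumes "(x :: 'k fls) \<in> FU K" "y \<in> FU K"
  shows "x * y \<in> FU K"
proof -
  obtain a v b w where "a \<in> F_units" "v \<in> u_ideal (int K)" "x = a * (1 + v)"
    "b \<in> F_units" "w \<in> u_ideal (int K)" "y = b * (1 + w)" using assms FU_iff by metis
  moreover have "v * w \<in> u_ideal (int K)"
    using u_ideal_mult[OF \<open>v \<in> _\<close> \<open>w \<in> _\<close>] by (rule u_ideal_mono[rotated]) simp
  ultimately have "x * y = (a * b) * (1 + (v + w + v * w))" "a * b \<in> F_units"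
    "v + w + v * w \<in> u_ideal (int K)"
    by (simp_all add: algebra_simps F_units_mult u_ideal_add)
  then show ?thesis using mult_in_FU by metis
qed

text \<open>Splitting \<open>1 + v\<close> into its even and odd parts \<open>e + o\<close> gives \<open>x = b e (1 + o/e)\<close>.\<close>

lemma FU_decompose:
  assumes K: "1 \<le> K" and x: "(x :: 'k fls) \<in> FU K"
  obtains a z where "a \<in> F_units" "tau z = - z" "z \<in> u_ideal (int K)" "x = a * (1 + z)"
proof -
  obtain b v where b: "b \<in> F_units" and v: "v \<in> u_ideal (int K)" and x_eq: "x = b * (1 + v)"
    using x FU_iff by blast
  define w where "w = 1 + v"
  define ev where "ev = (w + tau w) * fls_const (inverse 2)"
  define od where "od = (w - tau w) * fls_const (inverse 2)"
  have ev_nth: "ev $$ i = (if even i then w $$ i else 0)" for i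
    using two_neq_zero by (simp add: ev_def tau_nth)
  have od_nth: "od $$ i = (if even i then 0 else w $$ i)" for i
    using two_neq_zero by (simp add: od_def tau_nth)
  have w_eq: "w = ev + od" by (rule fls_eqI) (simp add: ev_nth od_nth)
  have tau_ev: "tau ev = ev" by (simp add: ev_def tau_mult tau_add add.commute)
  have tau_od: "tau od = - od" by (simp add: od_def tau_mult tau_diff algebra_simps)
  have v_nth: "\<forall>i<int K. v $$ i = 0" using v by (simp add: u_ideal_def)
  have ev: "ev - 1 \<in> u_ideal 1" using v_nth K by (auto simp: u_ideal_def ev_nth w_def)
  have od: "od \<in> u_ideal (int K)" using v_nth by (auto simp: u_ideal_def od_nth w_def)
  have ev_neq_0: "ev \<noteq> 0" using principal_unit_neq_zero[OF ev] .
  show ?thesis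
  proof
    show "b * ev \<in> F_units" using b ev_neq_0 tau_ev by (simp add: F_units_iff tau_mult)
    show "tau (od * inverse ev) = - (od * inverse ev)" by (simp add: tau_mult tau_inverse tau_ev tau_od)
    show "od * inverse ev \<in> u_ideal (int K)"
      using u_ideal_mult[OF od principal_unit_inverse(1)[OF ev]] by simp
    show "x = b * ev * (1 + od * inverse ev)"
      using ev_neq_0 by (simp add: x_eq w_def[symmetric] w_eq field_simps)
  qed
qed

lemma FU_decompose_unique:
  assumes "(a :: 'k fls) \<in> F_units" "tau z = - z" "a' \<in> F_units" "tau z' = - z'"
    and eq: "a * (1 + z) = a' * (1 + z')"
  shows "a = a'" "z = z'"
proof -
  have a: "tau a = a" "tau a' = a'" "a \<noteq> 0" using assms F_units_iff by auto
  have "tau (a * (1 + z)) = tau (a' * (1 + z'))" using eq by simp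
  then have eq': "a * (1 - z) = a' * (1 - z')" using assms(2,4) a by (simp add: tau_mult tau_add)
  have "a * (1 + z) + a * (1 - z) = a' * (1 + z') + a' * (1 - z')" by (simp only: eq eq')
  then have "2 * a = 2 * a'" by (simp add: ring_distribs mult_2_right)
  moreover have "(2 :: 'k fls) \<noteq> 0" using two_neq_zero fls_const_eq_0_iff[of "2 :: 'k"] by simp
  ultimately show "a = a'" by simp
  then show "z = z'" using eq a by simp
qed

definition chi_s :: "nat \<Rightarrow> 'k fls \<Rightarrow> 'k fls \<Rightarrow> complex" where
  "chi_s b s x = (let p = (SOME p. fst p \<in> F_units \<and> tau (snd p) = - snd p \<and>
                     snd p \<in> u_ideal (int b) \<and> x = fst p * (1 + snd p))
                  in chi (fst p) * chi (1 + snd p * s))"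

lemma chi_s_eq:
  assumes "a \<in> F_units" "tau z = - z" "z \<in> u_ideal (int b)" "x = a * (1 + z)"
  shows "chi_s b s x = chi a * chi (1 + z * s)"
proof -
  let ?P = "\<lambda>p. fst p \<in> F_units \<and> tau (snd p) = - snd p \<and> snd p \<in> u_ideal (int b) \<and>
                x = fst p * (1 + snd p)"
  have "?P (a, z)" using assms by simp
  then have "?P (SOME p. ?P p)" by (rule someI)
  then have "fst (SOME p. ?P p) = a" "snd (SOME p. ?P p) = z"
    using FU_decompose_unique[of "fst (SOME p. ?P p)" "snd (SOME p. ?P p)" a z] assms by auto
  then show ?thesis unfolding chi_s_def Let_def by simp
qed

lemma chi_s_one_plus_u_E_power:
  assumes "odd b" "h \<in> O_F"
  shows "chi_s b s (1 + u_E ^ b * h) = chi (1 + u_E ^ b * h * s)"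
proof -
  have h: "h \<in> u_ideal 0" "tau h = h" using assms(2) O_F_iff by auto
  have "tau (u_E ^ b * h) = - (u_E ^ b * h)" using assms(1) h by (simp add: tau_mult tau_u_E_power_odd)
  moreover have "u_E ^ b * h \<in> u_ideal (int b)" using u_ideal_mult[OF u_E_power_in_u_ideal h(1)] by simp
  ultimately show ?thesis using chi_s_eq[of 1 "u_E ^ b * h" b "1 + u_E ^ b * h" s] by (simp add: F_units_iff)
qed

lemma chi_s_eq_chi_on_FU_2n:
  assumes b: "1 \<le> b" "b \<le> 2 * n" and s: "s \<in> u_ideal 0" and x: "x \<in> FU (2 * n)"
  shows "chi_s b s x = chi x"
proof -
  obtain a z where a: "a \<in> F_units" and z: "tau z = - z" "z \<in> u_ideal (int (2 * n))"
    and x_eq: "x = a * (1 + z)"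
    using FU_decompose[OF _ x] n_pos by auto
  have zb: "z \<in> u_ideal (int b)" using u_ideal_mono[OF _ z(2)] b by simp
  have "chi (1 + z * s) = 1" by (rule chi_eq_1) (use u_ideal_mult[OF z(2) s] in simp)
  moreover have "chi (1 + z) = 1" by (rule chi_eq_1) (use z(2) in simp)
  moreover have "1 + z \<noteq> 0" using principal_unit_neq_zero[OF one_plus_principal[OF zb]] b by simp
  moreover have "a \<noteq> 0" using a F_units_iff by auto
  ultimately show ?thesis using chi_s_eq[OF a z(1) zb x_eq] x_eq chi_mult by simp
qed

text \<open>Because \<open>(1 + z\<^sub>1 s)(1 + z\<^sub>2 s) = P + (z\<^sub>1 + z\<^sub>2) s + z\<^sub>1 z\<^sub>2 (s\<^sup>2 - 1)\<close> with \<open>P = 1 + z\<^sub>1 z\<^sub>2\<close>.\<close>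

lemma chi_mult_one_plus_odd_parts:
  assumes b: "1 \<le> b" and z1: "z1 \<in> u_ideal (int b)" and z2: "z2 \<in> u_ideal (int b)"
    and s: "s \<in> u_ideal 0" and s_square: "s * s - 1 \<in> u_ideal (int (2 * n) - 2 * int b)"
  shows "chi (1 + z1 * z2) * chi (1 + (z1 + z2) * inverse (1 + z1 * z2) * s)
       = chi (1 + z1 * s) * chi (1 + z2 * s)"
proof -
  define P where "P = 1 + z1 * z2"
  have zz: "z1 * z2 \<in> u_ideal (int b + int b)" by (rule u_ideal_mult[OF z1 z2])
  have P: "P - 1 \<in> u_ideal 1" using u_ideal_mono[OF _ zz] b by (simp add: P_def)
  have P_neq_0: "P \<noteq> 0" by (rule principal_unit_neq_zero[OF P])
  have Z: "(z1 + z2) * inverse P \<in> u_ideal (int b)"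
    using u_ideal_mult[OF u_ideal_add[OF z1 z2] principal_unit_inverse(1)[OF P]] by simp
  have s1: "1 + z1 * s - 1 \<in> u_ideal 1" and s2: "1 + z2 * s - 1 \<in> u_ideal 1"
    using one_plus_mult_principal[OF _ b s] z1 z2 by auto
  have "P * (1 + (z1 + z2) * inverse P * s) = P + (P * inverse P) * (z1 + z2) * s"
    by (simp add: algebra_simps)
  then have "chi P * chi (1 + (z1 + z2) * inverse P * s) = chi (P + (z1 + z2) * s)"
    using P_neq_0 chi_mult[OF P_neq_0 principal_unit_neq_zero[OF one_plus_mult_principal[OF Z b s]]]
    by simp
  also have "\<dots> = chi ((1 + z1 * s) * (1 + z2 * s))"
  proof (rule chi_eq_if_congruent)
    have "P + (z1 + z2) * s - 1 = (P - 1) + (1 + z1 * s - 1) + (1 + z2 * s - 1)"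
      by (simp add: algebra_simps)
    then show "P + (z1 + z2) * s - 1 \<in> u_ideal 1" using P s1 s2 by (metis u_ideal_add)
    show "(1 + z1 * s) * (1 + z2 * s) - 1 \<in> u_ideal 1" using principal_unit_mult[OF s1 s2] .
    have "P + (z1 + z2) * s - (1 + z1 * s) * (1 + z2 * s) = - ((z1 * z2) * (s * s - 1))"
      by (simp add: P_def algebra_simps)
    moreover have "(z1 * z2) * (s * s - 1) \<in> u_ideal (int b + int b + (int (2 * n) - 2 * int b))"
      by (rule u_ideal_mult[OF zz s_square])
    ultimately show "P + (z1 + z2) * s - (1 + z1 * s) * (1 + z2 * s) \<in> u_ideal (int (2 * n))"
      by simp
  qed
  also have "\<dots> = chi (1 + z1 * s) * chi (1 + z2 * s)"
    using chi_mult principal_unit_neq_zero[OF s1] principal_unit_neq_zero[OF s2] by simp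
  finally show ?thesis by (simp add: P_def)
qed

lemma chi_s_character:
  assumes b: "1 \<le> b" and s: "s \<in> u_ideal 0"
    and s_square: "s * s - 1 \<in> u_ideal (int (2 * n) - 2 * int b)"
  shows "is_character_on (FU b) (chi_s b s)"
  unfolding is_character_on_def
proof (intro conjI ballI)
  fix x :: "'k fls" assume "x \<in> FU b"
  then obtain a z where "a \<in> F_units" "tau z = - z" "z \<in> u_ideal (int b)" "x = a * (1 + z)"
    by (rule FU_decompose[OF b])
  moreover have "a \<noteq> 0" using \<open>a \<in> F_units\<close> F_units_iff by auto
  moreover have "1 + z * s \<noteq> 0" using principal_unit_neq_zero[OF one_plus_mult_principal[OF _ b s]] \<open>z \<in> _\<close> .
  ultimately show "chi_s b s x \<noteq> 0" using chi_s_eq chi_neq_zero by simp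
next
  fix x y :: "'k fls" assume "x \<in> FU b" "y \<in> FU b"
  then obtain a1 z1 a2 z2 where
    r1: "a1 \<in> F_units" "tau z1 = - z1" "z1 \<in> u_ideal (int b)" "x = a1 * (1 + z1)" and
    r2: "a2 \<in> F_units" "tau z2 = - z2" "z2 \<in> u_ideal (int b)" "y = a2 * (1 + z2)"
    using FU_decompose[OF b] by metis
  define P where "P = 1 + z1 * z2"
  define Z where "Z = (z1 + z2) * inverse P"
  have P: "P - 1 \<in> u_ideal 1" using u_ideal_mono[OF _ u_ideal_mult[OF r1(3) r2(3)]] b by (simp add: P_def)
  have P_neq_0: "P \<noteq> 0" by (rule principal_unit_neq_zero[OF P])
  have a: "a1 \<noteq> 0" "a2 \<noteq> 0" using r1(1) r2(1) F_units_iff by auto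
  have tau_P: "tau P = P" using r1(2) r2(2) by (simp add: P_def tau_add tau_mult)
  have "a1 * a2 * P \<in> F_units" using r1(1) r2(1) P_neq_0 tau_P by (simp add: F_units_iff tau_mult)
  moreover have "tau Z = - Z" using r1(2) r2(2) tau_P by (simp add: Z_def tau_mult tau_add tau_inverse algebra_simps)
  moreover have "Z \<in> u_ideal (int b)"
    using u_ideal_mult[OF u_ideal_add[OF r1(3) r2(3)] principal_unit_inverse(1)[OF P]] by (simp add: Z_def)
  moreover have "x * y = a1 * a2 * P * (1 + Z)" using P_neq_0 by (simp add: r1(4) r2(4) Z_def P_def field_simps)
  ultimately have "chi_s b s (x * y) = chi (a1 * a2 * P) * chi (1 + Z * s)" by (rule chi_s_eq)
  also have "\<dots> = chi a1 * chi a2 * (chi P * chi (1 + Z * s))" using a P_neq_0 by (simp add: chi_mult)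
  also have "chi P * chi (1 + Z * s) = chi (1 + z1 * s) * chi (1 + z2 * s)"
    unfolding P_def Z_def by (rule chi_mult_one_plus_odd_parts[OF b r1(3) r2(3) s s_square])
  also have "chi a1 * chi a2 * (chi (1 + z1 * s) * chi (1 + z2 * s)) = chi_s b s x * chi_s b s y"
    using chi_s_eq[OF r1, of s] chi_s_eq[OF r2, of s] by simp
  finally show "chi_s b s (x * y) = chi_s b s x * chi_s b s y" .
qed


lemma R_alpha_tau'_iff:
  "(s :: 'k fls) \<in> R_alpha_tau' (2 * n - 1) \<alpha> \<longleftrightarrow> s \<in> R_alpha (2 * n - 1) \<alpha> \<and> tau s = s \<and>
     (int (2 * n) - 2 * int (2 * \<alpha> + 1) \<le> 0 \<or>
      s - 1 \<in> u_ideal (int (2 * n) - 2 * int (2 * \<alpha> + 1)) \<or>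
      s + 1 \<in> u_ideal (int (2 * n) - 2 * int (2 * \<alpha> + 1)))"
proof -
  have e: "int (2 * n - 1) + 1 - 2 * (2 * int \<alpha> + 1) = int (2 * n) - 2 * int (2 * \<alpha> + 1)"
    using n_pos by simp
  show ?thesis unfolding R_alpha_tau'_def R_alpha_tau_def Let_def e cong_u_iff_u_ideal by auto
qed

lemma R_alpha_tau'D:
  assumes "(s :: 'k fls) \<in> R_alpha_tau' (2 * n - 1) \<alpha>"
  shows "s \<in> u_ideal 0" "tau s = s" "s \<in> O_F"
proof -
  have "s \<in> R_alpha (2 * n - 1) \<alpha>" using assms unfolding R_alpha_tau'_iff by simp
  then show s: "s \<in> u_ideal 0" unfolding R_alpha_def u_ideal_def by force
  show "tau s = s" using assms unfolding R_alpha_tau'_iff by simp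
  then show "s \<in> O_F" using s by (simp add: O_F_iff)
qed

lemma R_alpha_tau'_square:
  assumes "(s :: 'k fls) \<in> R_alpha_tau' (2 * n - 1) \<alpha>"
  shows "s * s - 1 \<in> u_ideal (int (2 * n) - 2 * int (2 * \<alpha> + 1))"
proof -
  let ?e = "int (2 * n) - 2 * int (2 * \<alpha> + 1)"
  have s: "s - 1 \<in> u_ideal 0" "s + 1 \<in> u_ideal 0"
    using u_ideal_diff[OF R_alpha_tau'D(1)[OF assms] one_in_u_ideal]
      u_ideal_add[OF R_alpha_tau'D(1)[OF assms] one_in_u_ideal] by auto
  have prod: "s * s - 1 = (s - 1) * (s + 1)" by (simp add: algebra_simps)
  consider "?e \<le> 0" | "s - 1 \<in> u_ideal ?e" | "s + 1 \<in> u_ideal ?e"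
    using assms unfolding R_alpha_tau'_iff by auto
  then show ?thesis
  proof cases
    case 1
    then show ?thesis using u_ideal_mono[OF 1 u_ideal_mult[OF s, simplified]] prod by simp
  next
    case 2
    then show ?thesis using u_ideal_mult[OF 2 s(2)] prod by simp
  next
    case 3
    then show ?thesis using u_ideal_mult[OF s(1) 3] prod by simp
  qed
qed

lemma R_alpha_tau'_sign:
  assumes s: "(s :: 'k fls) \<in> R_alpha_tau' (2 * n - 1) \<alpha>" and \<alpha>: "\<alpha> < n div 2" and s_0: "s $$ 0 = (-1) ^ i"
  shows "s - fls_const ((-1) ^ i) \<in> u_ideal (int (2 * n) - 2 * int (2 * \<alpha> + 1))"
proof -
  let ?e = "int (2 * n) - 2 * int (2 * \<alpha> + 1)"
  have e_pos: "0 < ?e" using \<alpha> by presburger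
  consider "s - 1 \<in> u_ideal ?e" | "s + 1 \<in> u_ideal ?e" using s e_pos unfolding R_alpha_tau'_iff by auto
  then show ?thesis
  proof cases
    case 1
    then have "(s - 1) $$ 0 = 0" using e_pos unfolding u_ideal_def by blast
    then have "(-1) ^ i = (1::'k)" using s_0 by simp
    then show ?thesis using 1 by simp
  next
    case 2
    then have "(s + 1) $$ 0 = 0" using e_pos unfolding u_ideal_def by blast
    then have "(-1) ^ i + 1 = (0::'k)" using s_0 by simp
    then have "(-1) ^ i = (-1::'k)" by (simp only: eq_neg_iff_add_eq_0)
    then show ?thesis using 2 by simp
  qed
qed

lemma chi_s_eq_chi_tau_power:
  assumes \<alpha>: "\<alpha> < n div 2" and s: "s \<in> R_alpha_tau' (2 * n - 1) \<alpha>" and s_0: "s $$ 0 = (-1) ^ i"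
    and i: "i \<in> {0, 1}" and x: "x \<in> FU (2 * (2 * \<alpha> + 1))"
  shows "chi_s (2 * \<alpha> + 1) s x = chi ((tau ^^ i) x)"
proof -
  let ?b = "2 * \<alpha> + 1"
  let ?c = "fls_const ((-1) ^ i) :: 'k fls"
  obtain a z where a: "a \<in> F_units" and z: "tau z = - z" "z \<in> u_ideal (int (2 * ?b))"
    and x_eq: "x = a * (1 + z)"
    using FU_decompose[OF _ x] by auto
  have z_odd: "z \<in> u_ideal (2 * int ?b + 1)"
    using z by (intro tau_anti_in_u_ideal_Suc[OF two_neq_zero]) simp_all
  have z_b: "z \<in> u_ideal (int ?b)" using u_ideal_mono[OF _ z(2)] by simp
  have c_z: "1 + ?c * z - 1 \<in> u_ideal 1"
    using one_plus_principal[OF fls_const_mult_in_u_ideal[OF z_b]] by simp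
  have s_O: "s \<in> u_ideal 0" using R_alpha_tau'D(1)[OF s] .
  have "chi (1 + z * s) = chi (1 + ?c * z)"
  proof (rule chi_eq_if_congruent)
    show "1 + z * s - 1 \<in> u_ideal 1" using one_plus_mult_principal[OF z_b _ s_O] by simp
    show "1 + ?c * z - 1 \<in> u_ideal 1" by (rule c_z)
    have "z * (s - ?c) \<in> u_ideal (2 * int ?b + 1 + (int (2 * n) - 2 * int ?b))"
      by (rule u_ideal_mult[OF z_odd R_alpha_tau'_sign[OF s \<alpha> s_0]])
    moreover have "1 + z * s - (1 + ?c * z) = z * (s - ?c)" by (simp add: algebra_simps)
    ultimately show "1 + z * s - (1 + ?c * z) \<in> u_ideal (int (2 * n))"
      by (auto intro: u_ideal_mono[rotated])
  qed
  moreover have "(tau ^^ i) x = a * (1 + ?c * z)"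
    using i a z(1) by (auto simp: x_eq F_units_iff tau_mult tau_add)
  moreover have "a \<noteq> 0" using a F_units_iff by auto
  ultimately show ?thesis
    using chi_s_eq[OF a z(1) z_b x_eq] chi_mult principal_unit_neq_zero[OF c_z] by simp
qed

lemma is_chi_s_chi_s:
  assumes \<alpha>: "\<alpha> < n" and s: "s \<in> R_alpha_tau' (2 * n - 1) \<alpha>"
  shows "is_chi_s chi n \<alpha> s (chi_s (2 * \<alpha> + 1) s)"
proof -
  let ?b = "2 * \<alpha> + 1"
  have s_O: "s \<in> u_ideal 0" using R_alpha_tau'D(1)[OF s] .
  have m: "2 * n - 1 + 1 = 2 * n" using n_pos by simp
  show ?thesis unfolding is_chi_s_def Let_def m
  proof (intro conjI ballI allI impI)
    show "is_character_on (FU ?b) (chi_s ?b s)"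
      by (rule chi_s_character[OF _ s_O R_alpha_tau'_square[OF s]]) simp
    show "chi_s ?b s x = chi x" if "x \<in> FU (2 * n)" for x
      using chi_s_eq_chi_on_FU_2n[OF _ _ s_O that] \<alpha> by simp
    show "chi_s ?b s x = chi ((tau ^^ i) x)"
      if "\<alpha> < n div 2" "i \<in> {0, 1}" "s $$ 0 = (-1) ^ i" "x \<in> FU (2 * ?b)" for i x
      using chi_s_eq_chi_tau_power[OF that(1) s that(3,2,4)] .
  next
    fix h s' :: "'k fls" assume h: "h \<in> O_F" and lift: "is_lift (2 * n - 1) \<alpha> s s'"
    have h_O: "u_E ^ ?b * h \<in> u_ideal (int ?b)"
      using h O_F_subset_u_ideal by (intro u_E_power_mult_in_u_ideal) auto
    have s': "s' \<in> u_ideal 0" "s' - s \<in> u_ideal (int (2 * n - 1) - 2 * int \<alpha>)"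
      using lift O_F_subset_u_ideal by (auto simp: is_lift_def cong_u_iff_u_ideal)
    have "chi_s ?b s (1 + u_E ^ ?b * h) = chi (1 + u_E ^ ?b * h * s)"
      by (rule chi_s_one_plus_u_E_power[OF _ h]) simp
    also have "\<dots> = chi (1 + u_E ^ ?b * h * s')"
    proof (rule chi_eq_if_congruent)
      show "1 + u_E ^ ?b * h * s - 1 \<in> u_ideal 1" using one_plus_mult_principal[OF h_O _ s_O] by simp
      show "1 + u_E ^ ?b * h * s' - 1 \<in> u_ideal 1" using one_plus_mult_principal[OF h_O _ s'(1)] by simp
      have "u_E ^ ?b * h * (s' - s) \<in> u_ideal (int ?b + (int (2 * n - 1) - 2 * int \<alpha>))"
        by (rule u_ideal_mult[OF h_O s'(2)])
      moreover have "1 + u_E ^ ?b * h * s - (1 + u_E ^ ?b * h * s') = - (u_E ^ ?b * h * (s' - s))"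
        by (simp add: algebra_simps)
      ultimately show "1 + u_E ^ ?b * h * s - (1 + u_E ^ ?b * h * s') \<in> u_ideal (int (2 * n))"
        using n_pos by simp
    qed
    finally show "chi_s ?b s (1 + u_E ^ ?b * h) = chi (1 + u_E ^ ?b * h * s')" .
  qed
qed

text \<open>\<open>F\<^sup>\<times>\<close> and the elements \<open>1 + u\<^sup>b h\<close>, \<open>h \<in> O_F\<close>, generate \<open>F\<^sup>\<times> U_E\<^sup>b\<close>.\<close>

lemma character_eq_chi_s:
  assumes b: "odd b" and \<theta>: "is_character_on (FU b) \<theta>"
    and F: "\<forall>a\<in>F_units. \<theta> a = chi a"
    and O_F: "\<forall>h\<in>O_F. \<theta> (1 + u_E ^ b * h) = chi (1 + u_E ^ b * h * s)"
    and x: "x \<in> FU b"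
  shows "\<theta> x = chi_s b s x"
proof -
  have "1 \<le> b" using odd_pos[OF b] by simp
  then obtain a z where a: "a \<in> F_units" and z: "tau z = - z" "z \<in> u_ideal (int b)"
    and x_eq: "x = a * (1 + z)"
    using x by (rule FU_decompose)
  note h = tau_anti_eq_u_E_power_mult[OF two_neq_zero z b]
  have "\<theta> x = \<theta> a * \<theta> (1 + z)"
    using \<theta> F_units_in_FU[OF a] one_plus_in_FU[OF z(2)] x_eq by (simp add: is_character_on_def)
  also have "\<dots> = chi a * chi (1 + z * s)" using F a O_F h by metis
  also have "\<dots> = chi_s b s x" using chi_s_eq[OF a z x_eq] by simp
  finally show ?thesis .
qed

lemma is_chi_sD:
  assumes "is_chi_s chi n \<alpha> s \<theta>" "s \<in> O_F"
  shows "is_character_on (FU (2 * \<alpha> + 1)) \<theta>" "\<forall>x\<in>FU (2 * n). \<theta> x = chi x"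
    "\<forall>h\<in>O_F. \<theta> (1 + u_E ^ (2 * \<alpha> + 1) * h) = chi (1 + u_E ^ (2 * \<alpha> + 1) * h * s)"
proof -
  have m: "2 * n - 1 + 1 = 2 * n" using n_pos by simp
  have "is_lift (2 * n - 1) \<alpha> s s" using assms(2) by (simp add: is_lift_def cong_u_iff_u_ideal)
  then show "is_character_on (FU (2 * \<alpha> + 1)) \<theta>" "\<forall>x\<in>FU (2 * n). \<theta> x = chi x"
    "\<forall>h\<in>O_F. \<theta> (1 + u_E ^ (2 * \<alpha> + 1) * h) = chi (1 + u_E ^ (2 * \<alpha> + 1) * h * s)"
    using assms(1) unfolding is_chi_s_def Let_def m by blast+
qed

lemma is_chi_s_imp_eq_chi_s:
  assumes s: "s \<in> R_alpha_tau' (2 * n - 1) \<alpha>" and \<theta>: "is_chi_s chi n \<alpha> s \<theta>"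
    and x: "x \<in> FU (2 * \<alpha> + 1)"
  shows "\<theta> x = chi_s (2 * \<alpha> + 1) s x"
proof -
  note \<theta>' = is_chi_sD[OF \<theta> R_alpha_tau'D(3)[OF s]]
  show ?thesis
  proof (rule character_eq_chi_s[OF _ \<theta>'(1) _ \<theta>'(3) x])
    show "\<forall>a\<in>F_units. \<theta> a = chi a" using \<theta>'(2) F_units_in_FU by blast
  qed simp
qed

lemma R_alpha_tau'_diff_leading_term:
  assumes s1: "(s1 :: 'k fls) \<in> R_alpha_tau' (2 * n - 1) \<alpha>" and s2: "s2 \<in> R_alpha_tau' (2 * n - 1) \<alpha>"
    and "s1 \<noteq> s2"
  obtains j where "j < n - \<alpha>" "(s1 - s2) $$ int (2 * j) \<noteq> 0"
    "s1 - s2 - fls_const ((s1 - s2) $$ int (2 * j)) * u_E ^ (2 * j) \<in> u_ideal (int (2 * j) + 1)"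
proof -
  define d where "d = s1 - s2"
  have d_neq_0: "d \<noteq> 0" using \<open>s1 \<noteq> s2\<close> by (simp add: d_def)
  have s_O: "s1 \<in> u_ideal 0" "s2 \<in> u_ideal 0" using R_alpha_tau'D(1) s1 s2 by auto
  have tau_d: "tau d = d" using R_alpha_tau'D(2) s1 s2 by (simp add: d_def tau_diff)
  have d_support: "i < int (2 * n - 1) - 2 * int \<alpha>" if "d $$ i \<noteq> 0" for i
  proof -
    have "s1 $$ i \<noteq> 0 \<or> s2 $$ i \<noteq> 0" using that by (auto simp: d_def)
    then show ?thesis using s1 s2 unfolding R_alpha_tau'_iff R_alpha_def by auto
  qed
  define j where "j = nat (fls_subdegree d div 2)"
  have "0 \<le> fls_subdegree d" using s_O by (intro fls_subdegree_ge0I) (auto simp: d_def u_ideal_def)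
  moreover have "even (fls_subdegree d)"
    using d_neq_0 tau_d tau_eq_iff_odd_nth_eq_0[OF two_neq_zero] nth_fls_subdegree_nonzero by blast
  ultimately have subdegree_d: "fls_subdegree d = int (2 * j)" by (simp add: j_def)
  have lead: "d $$ int (2 * j) \<noteq> 0" using d_neq_0 subdegree_d by (metis nth_fls_subdegree_nonzero)
  have "d \<in> u_ideal (int (2 * j))" using subdegree_d by (simp add: u_ideal_def)
  from u_ideal_sub_leading_term[OF this]
  have "d - fls_const (d $$ int (2 * j)) * u_E ^ (2 * j) \<in> u_ideal (int (2 * j) + 1)" .
  moreover have "j < n - \<alpha>" using d_support[OF lead] n_pos by simp
  ultimately show ?thesis using that lead unfolding d_def by blast
qed

text \<open>Pairing the leading term \<open>c u\<^sup>2\<^sup>j\<close> of \<open>s\<^sub>1 - s\<^sub>2\<close> with \<open>h = (w/c) u\<^sup>m\<^sup>-\<^sup>b\<^sup>-\<^sup>2\<^sup>j\<close> makes the two values differ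
  by the factor \<open>psi w \<noteq> 1\<close>.\<close>

lemma R_alpha_tau'_eq_if_chi_eq:
  assumes s1: "s1 \<in> R_alpha_tau' (2 * n - 1) \<alpha>" and s2: "s2 \<in> R_alpha_tau' (2 * n - 1) \<alpha>"
    and eq: "\<forall>h\<in>O_F. chi (1 + u_E ^ (2 * \<alpha> + 1) * h * s1) = chi (1 + u_E ^ (2 * \<alpha> + 1) * h * s2)"
  shows "s1 = s2"
proof (rule ccontr)
  assume "s1 \<noteq> s2"
  let ?b = "2 * \<alpha> + 1"
  obtain j where j: "j < n - \<alpha>" and lead_coeff: "(s1 - s2) $$ int (2 * j) \<noteq> 0"
    and lead: "s1 - s2 - fls_const ((s1 - s2) $$ int (2 * j)) * u_E ^ (2 * j) \<in> u_ideal (int (2 * j) + 1)"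
    using R_alpha_tau'_diff_leading_term[OF s1 s2 \<open>s1 \<noteq> s2\<close>] .
  define c where "c = (s1 - s2) $$ int (2 * j)"
  have c_neq_0: "c \<noteq> 0" using lead_coeff by (simp add: c_def)
  have s_O: "s1 \<in> u_ideal 0" "s2 \<in> u_ideal 0" using R_alpha_tau'D(1) s1 s2 by auto
  define p where "p = 2 * (n - \<alpha> - 1 - j)"
  have exponents: "?b + p + 2 * j = 2 * n - 1" using j by (simp add: p_def)
  obtain w where w: "psi w \<noteq> 1" using psi_nontrivial by blast
  define h where "h = fls_const (w / c) * u_E ^ p"
  have h_O_F: "h \<in> O_F"
    unfolding h_def p_def by (rule fls_const_mult_u_E_even_power_in_O_F[OF two_neq_zero]) simp
  have h_O: "u_E ^ ?b * h \<in> u_ideal (int ?b)"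
    using h_O_F O_F_subset_u_ideal by (intro u_E_power_mult_in_u_ideal) auto
  define A where "A = u_E ^ ?b * h * s2"
  define W where "W = fls_const w * u_E ^ (2 * n - 1)"
  have A: "A \<in> u_ideal 1" using one_plus_mult_principal[OF h_O _ s_O(2)] by (simp add: A_def)
  have W: "W \<in> u_ideal 1" using layer_unit_principal[of "2 * n - 1" w] n_pos by (simp add: W_def layer_unit_def)
  have "W = fls_const (w / c) * u_E ^ (?b + p) * (fls_const c * u_E ^ (2 * j))"
  proof -
    have "fls_const (w / c) * u_E ^ (?b + p) * (fls_const c * u_E ^ (2 * j))
        = (fls_const (w / c) * fls_const c) * u_E ^ (?b + p + 2 * j)"
      by (simp only: power_add mult_ac)
    moreover have "fls_const (w / c) * fls_const c = fls_const w" using c_neq_0 by simp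
    ultimately show ?thesis unfolding W_def exponents by simp
  qed
  then have "u_E ^ ?b * h * s1 - (A + W)
      = fls_const (w / c) * u_E ^ (?b + p) * (s1 - s2 - fls_const c * u_E ^ (2 * j))"
    by (simp add: A_def h_def power_add algebra_simps)
  also have "\<dots> \<in> u_ideal (int (?b + p) + (int (2 * j) + 1))"
    by (intro u_ideal_mult fls_const_mult_in_u_ideal u_E_power_in_u_ideal lead[folded c_def])
  also have "int (?b + p) + (int (2 * j) + 1) = int (2 * n)" using exponents n_pos by simp
  finally have rest: "u_E ^ ?b * h * s1 - (A + W) \<in> u_ideal (int (2 * n))" .
  have "chi (1 + u_E ^ ?b * h * s1) = chi (1 + A + W)"
  proof (rule chi_eq_if_congruent)
    show "1 + u_E ^ ?b * h * s1 - 1 \<in> u_ideal 1" using one_plus_mult_principal[OF h_O _ s_O(1)] by simp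
    show "1 + A + W - 1 \<in> u_ideal 1" using u_ideal_add[OF A W] by simp
    have "1 + u_E ^ ?b * h * s1 - (1 + A + W) = u_E ^ ?b * h * s1 - (A + W)" by simp
    then show "1 + u_E ^ ?b * h * s1 - (1 + A + W) \<in> u_ideal (int (2 * n))" using rest by (simp only:)
  qed
  also have "\<dots> = chi (1 + A) * psi w" unfolding W_def by (rule chi_add_top_term[OF A])
  finally have "chi (1 + A) * psi w = chi (1 + A)" using eq h_O_F by (simp add: A_def)
  moreover have "chi (1 + A) \<noteq> 0" using A by (intro chi_neq_zero principal_unit_neq_zero) simp
  ultimately show False using w by simp
qed

section \<open>The converse\<close>

lemma chi_tau_eq_on_FU_2n:
  assumes x: "x \<in> FU (2 * n)"
  shows "chi (tau x) = chi x"
proof -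
  obtain a z where a: "a \<in> F_units" and z: "tau z = - z" "z \<in> u_ideal (int (2 * n))"
    and x_eq: "x = a * (1 + z)"
    using _ x by (rule FU_decompose) (use n_pos in simp)
  have a': "a \<noteq> 0" "tau a = a" using a F_units_iff by auto
  have "chi (1 + z) = 1" by (rule chi_eq_1) (use z(2) in simp)
  moreover have "chi (1 + - z) = 1" by (rule chi_eq_1) (use z(2) in simp)
  moreover have "1 + z \<noteq> 0" "1 + - z \<noteq> 0"
  proof -
    have n: "1 \<le> int (2 * n)" using n_pos by simp
    have minus_z: "- z \<in> u_ideal (int (2 * n))" using z(2) by simp
    show "1 + z \<noteq> 0" by (rule principal_unit_neq_zero[OF one_plus_principal[OF z(2) n]])
    show "1 + - z \<noteq> 0" by (rule principal_unit_neq_zero[OF one_plus_principal[OF minus_z n]])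
  qed
  moreover have "tau x = a * (1 + - z)" using z(1) a' by (simp add: x_eq tau_mult tau_add)
  ultimately show ?thesis using x_eq chi_mult a' by simp
qed

lemma layer_unit_in_FU: "b \<le> L \<Longrightarrow> layer_unit L c \<in> (FU b :: 'k fls set)"
  using one_plus_in_FU[OF u_ideal_mono[OF _ layer_unit_minus_one]] by (simp add: layer_unit_def)

lemma layer_unit_mult:
  assumes L: "odd L"
  obtains y :: "'k fls" where "y \<in> FU (L + 2)"
    "layer_unit L c * layer_unit L c' = layer_unit L (c + c') * y"
proof -
  define X where "X = (u_E :: 'k fls) ^ L"
  have L1: "1 \<le> L" using odd_pos[OF L] by simp
  have X: "X \<in> u_ideal (int L)" by (simp add: X_def u_E_power_in_u_ideal)
  have g: "layer_unit L a - 1 \<in> u_ideal 1" for a :: 'k using L1 by (rule layer_unit_principal)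
  define f where "f = 1 + fls_const (c * c') * (X * X)"
  have "fls_const (c * c') * (X * X) \<in> u_ideal (int L + int L)"
    by (intro fls_const_mult_in_u_ideal u_ideal_mult X)
  then have f: "f - 1 \<in> u_ideal 1" using L1 by (auto simp: f_def intro: u_ideal_mono[rotated])
  have f_F: "f \<in> F_units"
    using principal_unit_neq_zero[OF f]
    by (simp add: F_units_iff f_def X_def tau_add tau_mult tau_u_E_power_odd[OF L])
  define Q where "Q = fls_const ((c + c') * c * c') * (X * X * X)"
  define v where "v = - Q * inverse (layer_unit L (c + c')) * inverse f"
  have "v \<in> u_ideal (int L + int L + int L + 0 + 0)" unfolding v_def Q_def
    by (intro u_ideal_mult principal_unit_inverse(1) g f fls_const_mult_in_u_ideal X
        iffD2[OF uminus_in_u_ideal_iff])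
  then have v: "v \<in> u_ideal (int (L + 2))" by (rule u_ideal_mono[rotated]) (use L1 in simp)
  have "layer_unit L c * layer_unit L c' - layer_unit L (c + c') * f = - Q"
    by (simp add: Q_def layer_unit_def f_def X_def algebra_simps flip: fls_plus_const fls_const_mult_const)
  moreover have "layer_unit L (c + c') * (f * v) = - Q"
    using principal_unit_neq_zero[OF g] principal_unit_neq_zero[OF f] by (simp add: v_def field_simps)
  ultimately have "layer_unit L c * layer_unit L c' = layer_unit L (c + c') * (f * (1 + v))"
    by (simp add: algebra_simps)
  then show ?thesis using mult_in_FU[OF f_F v] that by blast
qed

text \<open>Write \<open>x = a (1 + u\<^sup>L h)\<close> with \<open>h \<in> O_F\<close>; as \<open>h\<close> has no odd coefficients,
  \<open>h - h\<^sub>0 \<in> u\<^sup>2 O_E\<close>, so \<open>1 + u\<^sup>L h \<equiv> 1 + h\<^sub>0 u\<^sup>L\<close> modulo \<open>U_E\<^sup>L\<^sup>+\<^sup>2\<close>.\<close>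

lemma FU_factor_layer_unit:
  assumes L: "odd L" and x: "(x :: 'k fls) \<in> FU L"
  obtains a c y where "a \<in> F_units" "y \<in> FU (L + 2)" "x = a * (layer_unit L c * y)"
proof -
  have L1: "1 \<le> L" using odd_pos[OF L] by simp
  obtain a z where a: "a \<in> F_units" and z: "tau z = - z" "z \<in> u_ideal (int L)"
    and x_eq: "x = a * (1 + z)"
    using L1 x by (rule FU_decompose)
  define h where "h = fls_shift (int L) z"
  note h = tau_anti_eq_u_E_power_mult[OF two_neq_zero z L, folded h_def]
  have h': "h \<in> u_ideal 0" "tau h = h" using h(1) O_F_iff by auto
  define c where "c = h $$ 0"
  have "h - fls_const c \<in> u_ideal 1" using u_ideal_sub_leading_term[of h 0] h'(1) by (simp add: c_def)
  then have h_c: "h - fls_const c \<in> u_ideal 2"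
    using tau_fixed_in_u_ideal_Suc[OF two_neq_zero, of "h - fls_const c" 0] h'(2) by (simp add: tau_diff)
  have g: "layer_unit L c - 1 \<in> u_ideal 1" using L1 by (rule layer_unit_principal)
  define y where "y = (1 + z) * inverse (layer_unit L c)"
  have "y - 1 = u_E ^ L * (h - fls_const c) * inverse (layer_unit L c)"
    using principal_unit_neq_zero[OF g] h(2) by (simp add: y_def layer_unit_def field_simps)
  also have "\<dots> \<in> u_ideal (int L + 2 + 0)"
    by (intro u_ideal_mult u_E_power_in_u_ideal h_c principal_unit_inverse(1)[OF g])
  finally have "y - 1 \<in> u_ideal (int (L + 2))" by (simp add: add.commute)
  from one_plus_in_FU[OF this] have "y \<in> FU (L + 2)" by simp
  moreover have "x = a * (layer_unit L c * y)" using principal_unit_neq_zero[OF g] by (simp add: x_eq y_def)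
  ultimately show ?thesis using a that by blast
qed

lemma layer_quotient_eq_psi:
  fixes \<theta> \<theta>' :: "'k fls \<Rightarrow> complex"
  assumes L: "odd L" "b \<le> L" and \<theta>: "is_character_on (FU b) \<theta>" and \<theta>': "is_character_on (FU b) \<theta>'"
    and agree: "\<forall>x\<in>FU (L + 2). \<theta> x = \<theta>' x"
  obtains e where "\<forall>c. \<theta> (layer_unit L c) = \<theta>' (layer_unit L c) * psi (e * c)"
proof -
  have g: "layer_unit L c \<in> FU b" for c :: 'k using layer_unit_in_FU[OF L(2)] .
  have "\<exists>e. \<forall>c. \<theta> (layer_unit L c) / \<theta>' (layer_unit L c) = psi (e * c)"
  proof (rule additive_character_eq_psi_scaled)
    fix c1 c2 :: 'k
    obtain y where y: "y \<in> FU (L + 2)" and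
      g_mult: "layer_unit L c1 * layer_unit L c2 = layer_unit L (c1 + c2) * y"
      by (rule layer_unit_mult[OF L(1), where c = c1 and c' = c2])
    have y_b: "y \<in> FU b" using FU_mono[OF _ y] L by simp
    have "\<theta> (layer_unit L c1) * \<theta> (layer_unit L c2) = \<theta> (layer_unit L (c1 + c2)) * \<theta> y"
      "\<theta>' (layer_unit L c1) * \<theta>' (layer_unit L c2) = \<theta>' (layer_unit L (c1 + c2)) * \<theta>' y"
      using \<theta> \<theta>' g_mult g y_b by (metis is_character_on_def)+
    moreover have "\<theta> y = \<theta>' y" "\<theta>' y \<noteq> 0" using agree y \<theta>' y_b by (auto simp: is_character_on_def)
    ultimately show "\<theta> (layer_unit L (c1 + c2)) / \<theta>' (layer_unit L (c1 + c2))
        = \<theta> (layer_unit L c1) / \<theta>' (layer_unit L c1) * (\<theta> (layer_unit L c2) / \<theta>' (layer_unit L c2))"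
      by simp
  next
    show "\<theta> (layer_unit L c) / \<theta>' (layer_unit L c) \<noteq> 0" for c
      using \<theta> \<theta>' g by (simp add: is_character_on_def)
  qed
  then obtain e where "\<forall>c. \<theta> (layer_unit L c) / \<theta>' (layer_unit L c) = psi (e * c)" ..
  then have "\<forall>c. \<theta> (layer_unit L c) = \<theta>' (layer_unit L c) * psi (e * c)"
    using \<theta>' g by (simp add: is_character_on_def field_simps)
  then show ?thesis by (rule that)
qed

lemma character_eq_on_FU_layer:
  fixes \<theta> \<theta>' :: "'k fls \<Rightarrow> complex"
  assumes L: "odd L" "b \<le> L" and \<theta>: "is_character_on (FU b) \<theta>" and \<theta>': "is_character_on (FU b) \<theta>'"
    and agree: "\<forall>x\<in>FU (L + 2). \<theta> x = \<theta>' x" and layer: "\<forall>c. \<theta> (layer_unit L c) = \<theta>' (layer_unit L c)"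
    and x: "x \<in> FU L"
  shows "\<theta> x = \<theta>' x"
proof -
  obtain a c y where a: "a \<in> F_units" and y: "y \<in> FU (L + 2)" and x_eq: "x = a * (layer_unit L c * y)"
    using FU_factor_layer_unit[OF L(1) x] .
  have "a \<in> FU b" "y \<in> FU b" "a \<in> FU (L + 2)" using FU_mono[OF _ y] F_units_in_FU[OF a] L by auto
  moreover have "layer_unit L c \<in> FU b" using layer_unit_in_FU[OF L(2)] .
  moreover note FU_mult[OF calculation(4,2)]
  ultimately show ?thesis
    using \<theta> \<theta>' agree layer y unfolding x_eq is_character_on_def by simp
qed

lemma chi_s_eq_if_congruent:
  assumes b: "1 \<le> b" "b \<le> K" and x: "x \<in> FU K"
    and s: "s \<in> u_ideal 0" "s' \<in> u_ideal 0" and s_s': "s' - s \<in> u_ideal e"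
    and e: "int (2 * n) \<le> int K + e"
  shows "chi_s b s' x = chi_s b s x"
proof -
  obtain a z where a: "a \<in> F_units" and z: "tau z = - z" "z \<in> u_ideal (int K)"
    and x_eq: "x = a * (1 + z)"
    using _ x by (rule FU_decompose) (use b in simp)
  have z_b: "z \<in> u_ideal (int b)" using u_ideal_mono[OF _ z(2)] b by simp
  have "chi (1 + z * s') = chi (1 + z * s)"
  proof (rule chi_eq_if_congruent)
    show "1 + z * s' - 1 \<in> u_ideal 1" using one_plus_mult_principal[OF z_b b(1) s(2)] .
    show "1 + z * s - 1 \<in> u_ideal 1" using one_plus_mult_principal[OF z_b b(1) s(1)] .
    have "1 + z * s' - (1 + z * s) = z * (s' - s)" by (simp add: algebra_simps)
    also have "\<dots> \<in> u_ideal (int K + e)" by (rule u_ideal_mult[OF z(2) s_s'])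
    finally show "1 + z * s' - (1 + z * s) \<in> u_ideal (int (2 * n))" using e by (rule u_ideal_mono[rotated])
  qed
  then show ?thesis using chi_s_eq[OF a z(1) z_b x_eq] by simp
qed

lemma chi_s_layer_unit:
  assumes b: "odd b" and L: "odd L" "b \<le> L"
  shows "chi_s b s (layer_unit L c) = chi (1 + fls_const c * u_E ^ L * s)"
proof -
  have "fls_const c * u_E ^ (L - b) \<in> O_F"
    using b L by (intro fls_const_mult_u_E_even_power_in_O_F[OF two_neq_zero]) simp
  moreover have "u_E ^ L = u_E ^ b * (u_E :: 'k fls) ^ (L - b)" using L(2) by (simp flip: power_add)
  then have "layer_unit L c = 1 + u_E ^ b * (fls_const c * u_E ^ (L - b))"
    "fls_const c * u_E ^ L * s = u_E ^ b * (fls_const c * u_E ^ (L - b)) * s"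
    by (simp_all add: layer_unit_def mult_ac)
  ultimately show ?thesis using chi_s_one_plus_u_E_power[OF b] by (simp only:)
qed

lemma chi_s_layer_unit_add_top:
  assumes b: "odd b" and L: "odd L" "b \<le> L" "L + p = 2 * n - 1" and s: "s \<in> u_ideal 0"
  shows "chi_s b (s + fls_const e * u_E ^ p) (layer_unit L c) = chi_s b s (layer_unit L c) * psi (c * e)"
proof -
  have A: "fls_const c * u_E ^ L * s \<in> u_ideal 1"
    using one_plus_mult_principal[OF fls_const_mult_in_u_ideal[OF u_E_power_in_u_ideal] _ s, of L c]
      odd_pos[OF L(1)] by simp
  have "u_E ^ (2 * n - 1) = u_E ^ L * (u_E :: 'k fls) ^ p" by (subst L(3)[symmetric]) (rule power_add)
  then have "fls_const c * u_E ^ L * (s + fls_const e * u_E ^ p)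
      = fls_const c * u_E ^ L * s + fls_const (c * e) * u_E ^ (2 * n - 1)"
    by (simp add: algebra_simps)
  then show ?thesis
    using chi_s_layer_unit[OF b L(1,2)] chi_add_top_term[OF A, of "c * e"] by (simp add: add.assoc)
qed

text \<open>The invariant of the descent in the converse: \<open>s\<close> lies in \<open>R_alpha_tau'\<close> with sign \<open>(-1)\<^sup>i\<close>.\<close>

definition admissible :: "nat \<Rightarrow> nat \<Rightarrow> 'k fls \<Rightarrow> bool" where
  "admissible \<alpha> i s \<longleftrightarrow> s \<in> R_alpha (2 * n - 1) \<alpha> \<and> tau s = s \<and>
     (\<alpha> < n div 2 \<longrightarrow> s - fls_const ((-1) ^ i) \<in> u_ideal (int (2 * n) - 2 * int (2 * \<alpha> + 1)))"

lemma admissible_R_alpha_tau':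
  assumes s: "admissible \<alpha> i s" and i: "i \<in> {0, 1}"
  shows "s \<in> R_alpha_tau' (2 * n - 1) \<alpha>"
proof -
  let ?e = "int (2 * n) - 2 * int (2 * \<alpha> + 1)"
  have "s - 1 \<in> u_ideal ?e \<or> s + 1 \<in> u_ideal ?e" if "0 < ?e"
  proof -
    have "\<alpha> < n div 2" using that by presburger
    then have "s - fls_const ((-1) ^ i) \<in> u_ideal ?e" using s by (simp add: admissible_def)
    then show ?thesis using i by auto
  qed
  then show ?thesis using s unfolding R_alpha_tau'_iff admissible_def by force
qed

lemma admissible_add:
  assumes s: "admissible \<alpha> i s" and p: "even p" "int p < int (2 * n - 1) - 2 * int \<alpha>"
    and sign: "\<alpha> < n div 2 \<Longrightarrow> int (2 * n) - 2 * int (2 * \<alpha> + 1) \<le> int p"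
  shows "admissible \<alpha> i (s + fls_const e * u_E ^ p)"
  unfolding admissible_def
proof (intro conjI impI)
  show "s + fls_const e * u_E ^ p \<in> R_alpha (2 * n - 1) \<alpha>"
    using s p(2) by (auto simp: admissible_def R_alpha_def u_E_def split: if_splits)
  show "tau (s + fls_const e * u_E ^ p) = s + fls_const e * u_E ^ p"
    using s p(1) by (simp add: admissible_def tau_add tau_mult tau_u_E_power_even)
  assume \<alpha>: "\<alpha> < n div 2"
  have "fls_const e * u_E ^ p \<in> u_ideal (int (2 * n) - 2 * int (2 * \<alpha> + 1))"
    using u_ideal_mono[OF sign[OF \<alpha>] fls_const_mult_in_u_ideal[OF u_E_power_in_u_ideal]] .
  then show "s + fls_const e * u_E ^ p - fls_const ((-1) ^ i) \<in> u_ideal (int (2 * n) - 2 * int (2 * \<alpha> + 1))"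
    using s \<alpha> u_ideal_add by (fastforce simp: admissible_def algebra_simps)
qed

text \<open>One step of the descent: if \<open>\<theta>\<close> agrees with \<open>\<chi>\<^sub>s\<close> on \<open>F\<^sup>\<times> U_E\<^sup>L\<^sup>+\<^sup>2\<close>, their quotient on \<open>1 + c u\<^sup>L\<close> is
  an additive character \<open>c \<mapsto> psi (e c)\<close> of \<open>k\<close>, and \<open>s + e u\<^sup>m\<^sup>-\<^sup>L\<close> absorbs it.\<close>

lemma admissible_lower:
  assumes \<alpha>: "\<alpha> < n" and \<theta>: "is_character_on (FU (2 * \<alpha> + 1)) \<theta>" and i: "i \<in> {0, 1}"
    and J: "J < n - \<alpha>" "\<alpha> < n div 2 \<Longrightarrow> J \<le> \<alpha>" and s: "admissible \<alpha> i s"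
    and agree: "\<forall>x\<in>FU (2 * \<alpha> + 1 + 2 * (J + 1)). \<theta> x = chi_s (2 * \<alpha> + 1) s x"
  obtains s' where "admissible \<alpha> i s'" "\<forall>x\<in>FU (2 * \<alpha> + 1 + 2 * J). \<theta> x = chi_s (2 * \<alpha> + 1) s' x"
proof -
  let ?b = "2 * \<alpha> + 1"
  define L where "L = ?b + 2 * J"
  define p where "p = 2 * (n - \<alpha> - 1 - J)"
  have L: "odd L" "?b \<le> L" "L + p = 2 * n - 1" using J(1) by (simp_all add: L_def p_def)
  have agree': "\<forall>x\<in>FU (L + 2). \<theta> x = chi_s ?b s x" using agree by (simp add: L_def)
  have s_R: "s \<in> R_alpha_tau' (2 * n - 1) \<alpha>" by (rule admissible_R_alpha_tau'[OF s i])
  have s_O: "s \<in> u_ideal 0" by (rule R_alpha_tau'D(1)[OF s_R])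
  have chi_s: "is_character_on (FU ?b) (chi_s ?b s)"
    by (rule chi_s_character[OF _ s_O R_alpha_tau'_square[OF s_R]]) simp
  obtain e where e: "\<forall>c. \<theta> (layer_unit L c) = chi_s ?b s (layer_unit L c) * psi (e * c)"
    by (rule layer_quotient_eq_psi[OF L(1,2) \<theta> chi_s agree'])
  define s' where "s' = s + fls_const e * u_E ^ p"
  have s': "admissible \<alpha> i s'"
    unfolding s'_def using J L(3) by (intro admissible_add[OF s]) (auto simp: p_def)
  have s'_R: "s' \<in> R_alpha_tau' (2 * n - 1) \<alpha>" by (rule admissible_R_alpha_tau'[OF s' i])
  have s'_O: "s' \<in> u_ideal 0" by (rule R_alpha_tau'D(1)[OF s'_R])
  have "\<theta> x = chi_s ?b s' x" if "x \<in> FU L" for x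
  proof (rule character_eq_on_FU_layer[OF L(1,2) \<theta> _ _ _ that])
    show "is_character_on (FU ?b) (chi_s ?b s')"
      by (rule chi_s_character[OF _ s'_O R_alpha_tau'_square[OF s'_R]]) simp
    show "\<forall>x\<in>FU (L + 2). \<theta> x = chi_s ?b s' x"
    proof
      fix x :: "'k fls" assume x: "x \<in> FU (L + 2)"
      have "chi_s ?b s' x = chi_s ?b s x"
        using L n_pos
        by (intro chi_s_eq_if_congruent[OF _ _ x s_O s'_O, where e = "int p"])
          (simp_all add: s'_def fls_const_mult_in_u_ideal u_E_power_in_u_ideal)
      then show "\<theta> x = chi_s ?b s' x" using agree' x by simp
    qed
    show "\<forall>c. \<theta> (layer_unit L c) = chi_s ?b s' (layer_unit L c)"
      using e chi_s_layer_unit_add_top[OF _ L s_O] by (simp add: s'_def mult.commute)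
  qed
  then show ?thesis using that s' by (simp add: L_def)
qed

lemma admissible_sign: "\<alpha> < n \<Longrightarrow> admissible \<alpha> i (fls_const ((-1) ^ i))"
  by (auto simp: admissible_def R_alpha_def)

lemma eq_chi_s_sign_initially:
  assumes \<alpha>: "\<alpha> < n" and i: "i \<in> {0, 1}"
    and agree: "\<forall>x\<in>FU (min (2 * n) (2 * (2 * \<alpha> + 1))). \<theta> x = chi ((tau ^^ i) x)"
    and x: "x \<in> FU (2 * \<alpha> + 1 + 2 * (if \<alpha> < n div 2 then \<alpha> + 1 else n - \<alpha>))"
  shows "\<theta> x = chi_s (2 * \<alpha> + 1) (fls_const ((-1) ^ i)) x"
proof (cases "\<alpha> < n div 2")
  case True
  have "min (2 * n) (2 * (2 * \<alpha> + 1)) = 2 * (2 * \<alpha> + 1)" using True by presburger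
  moreover have "x \<in> FU (2 * (2 * \<alpha> + 1))" using FU_mono[OF _ x] True by simp
  moreover have "(fls_const ((-1) ^ i) :: 'k fls) \<in> R_alpha_tau' (2 * n - 1) \<alpha>"
    by (rule admissible_R_alpha_tau'[OF admissible_sign[OF \<alpha>] i])
  ultimately show ?thesis using agree chi_s_eq_chi_tau_power[OF True _ _ i] by simp
next
  case False
  have x_2n: "x \<in> FU (2 * n)" using FU_mono[OF _ x] False \<alpha> by simp
  then have "x \<in> FU (min (2 * n) (2 * (2 * \<alpha> + 1)))" using FU_mono[OF _ x_2n] by simp
  then have "\<theta> x = chi ((tau ^^ i) x)" using agree by blast
  also have "\<dots> = chi x" using i chi_tau_eq_on_FU_2n[OF x_2n] by auto
  also have "\<dots> = chi_s (2 * \<alpha> + 1) (fls_const ((-1) ^ i)) x"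
    using chi_s_eq_chi_on_FU_2n[OF _ _ _ x_2n] \<alpha> by simp
  finally show ?thesis .
qed

lemma exists_R_alpha_tau'_eq_chi_s:
  assumes \<alpha>: "\<alpha> < n" and \<theta>: "is_character_on (FU (2 * \<alpha> + 1)) \<theta>" and i: "i \<in> {0, 1}"
    and agree: "\<forall>x\<in>FU (min (2 * n) (2 * (2 * \<alpha> + 1))). \<theta> x = chi ((tau ^^ i) x)"
  obtains s where "s \<in> R_alpha_tau' (2 * n - 1) \<alpha>" "\<forall>x\<in>FU (2 * \<alpha> + 1). \<theta> x = chi_s (2 * \<alpha> + 1) s x"
proof -
  let ?b = "2 * \<alpha> + 1"
  define J0 where "J0 = (if \<alpha> < n div 2 then \<alpha> + 1 else n - \<alpha>)"
  have J0: "J0 \<le> n - \<alpha>" "\<alpha> < n div 2 \<Longrightarrow> J0 \<le> \<alpha> + 1" unfolding J0_def by presburger+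
  have "\<exists>s. admissible \<alpha> i s \<and> (\<forall>x\<in>FU (?b + 2 * (J0 - k)). \<theta> x = chi_s ?b s x)" if "k \<le> J0" for k
    using that
  proof (induction k)
    case 0
    show ?case using admissible_sign[OF \<alpha>] eq_chi_s_sign_initially[OF \<alpha> i agree] by (auto simp: J0_def)
  next
    case (Suc k)
    then obtain s where s: "admissible \<alpha> i s" "\<forall>x\<in>FU (?b + 2 * (J0 - k)). \<theta> x = chi_s ?b s x"
      by auto
    define J where "J = J0 - Suc k"
    have "J0 - k = J + 1" using Suc.prems by (simp add: J_def)
    moreover have "J < n - \<alpha>" "\<alpha> < n div 2 \<Longrightarrow> J \<le> \<alpha>" using J0 Suc.prems by (auto simp: J_def)
    ultimately obtain s' where "admissible \<alpha> i s'" "\<forall>x\<in>FU (?b + 2 * J). \<theta> x = chi_s ?b s' x"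
      using admissible_lower[OF \<alpha> \<theta> i _ _ s(1)] s(2) by metis
    then show ?case by (auto simp: J_def)
  qed
  from this[of J0] obtain s where "admissible \<alpha> i s" "\<forall>x\<in>FU ?b. \<theta> x = chi_s ?b s x" by auto
  then show ?thesis using that admissible_R_alpha_tau'[OF _ i] by blast
qed

lemma is_chi_s_if_eq_chi_s:
  assumes \<alpha>: "\<alpha> < n" and s: "s \<in> R_alpha_tau' (2 * n - 1) \<alpha>"
    and \<theta>: "is_character_on (FU (2 * \<alpha> + 1)) \<theta>" and eq: "\<forall>x\<in>FU (2 * \<alpha> + 1). \<theta> x = chi_s (2 * \<alpha> + 1) s x"
  shows "is_chi_s chi n \<alpha> s \<theta>"
proof -
  have m: "2 * n - 1 + 1 = 2 * n" using n_pos by simp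
  have "x \<in> FU (2 * \<alpha> + 1)" if "x \<in> FU (2 * n) \<or> x \<in> FU (2 * (2 * \<alpha> + 1))" for x :: "'k fls"
    using that FU_mono[of "2 * \<alpha> + 1" "2 * n" x] FU_mono[of "2 * \<alpha> + 1" "2 * (2 * \<alpha> + 1)" x] \<alpha>
    by auto
  moreover have "1 + u_E ^ (2 * \<alpha> + 1) * h \<in> FU (2 * \<alpha> + 1)" if "h \<in> O_F" for h :: "'k fls"
    using u_E_power_mult_in_u_ideal[of h "2 * \<alpha> + 1"] that O_F_subset_u_ideal
    by (intro one_plus_in_FU) auto
  ultimately show ?thesis
    using is_chi_s_chi_s[OF \<alpha> s] \<theta> eq unfolding is_chi_s_def Let_def m by auto
qed

lemma ex_is_chi_s_unique:
  assumes "\<alpha> < n" "s \<in> R_alpha_tau' (2 * n - 1) \<alpha>"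
  shows "\<exists>\<theta>. is_chi_s chi n \<alpha> s \<theta> \<and>
           (\<forall>\<theta>'. is_chi_s chi n \<alpha> s \<theta>' \<longrightarrow> (\<forall>x\<in>FU (2 * \<alpha> + 1). \<theta>' x = \<theta> x))"
  using is_chi_s_chi_s[OF assms] is_chi_s_imp_eq_chi_s[OF assms(2)] by blast

lemma ex1_R_alpha_tau'_is_chi_s:
  assumes \<alpha>: "\<alpha> < n" and \<theta>: "is_character_on (FU (2 * \<alpha> + 1)) \<theta>"
    and agree: "(\<forall>x\<in>FU (min (2 * n) (2 * (2 * \<alpha> + 1))). \<theta> x = chi x) \<or>
                (\<forall>x\<in>FU (min (2 * n) (2 * (2 * \<alpha> + 1))). \<theta> x = chi (tau x))"
  shows "\<exists>!s. s \<in> R_alpha_tau' (2 * n - 1) \<alpha> \<and> is_chi_s chi n \<alpha> s \<theta>"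
proof -
  obtain i :: nat where i: "i \<in> {0, 1}"
    "\<forall>x\<in>FU (min (2 * n) (2 * (2 * \<alpha> + 1))). \<theta> x = chi ((tau ^^ i) x)"
  proof -
    from agree show ?thesis
    proof
      assume "\<forall>x\<in>FU (min (2 * n) (2 * (2 * \<alpha> + 1))). \<theta> x = chi x"
      then show ?thesis using that[of 0] by simp
    next
      assume "\<forall>x\<in>FU (min (2 * n) (2 * (2 * \<alpha> + 1))). \<theta> x = chi (tau x)"
      then show ?thesis using that[of 1] by simp
    qed
  qed
  obtain s where s: "s \<in> R_alpha_tau' (2 * n - 1) \<alpha>" "\<forall>x\<in>FU (2 * \<alpha> + 1). \<theta> x = chi_s (2 * \<alpha> + 1) s x"
    using exists_R_alpha_tau'_eq_chi_s[OF \<alpha> \<theta> i] .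
  have \<theta>_s: "is_chi_s chi n \<alpha> s \<theta>" by (rule is_chi_s_if_eq_chi_s[OF \<alpha> s(1) \<theta> s(2)])
  show ?thesis
  proof (rule ex1I[of _ s])
    show "s \<in> R_alpha_tau' (2 * n - 1) \<alpha> \<and> is_chi_s chi n \<alpha> s \<theta>" using s(1) \<theta>_s by blast
    fix s' assume s': "s' \<in> R_alpha_tau' (2 * n - 1) \<alpha> \<and> is_chi_s chi n \<alpha> s' \<theta>"
    show "s' = s"
    proof (rule R_alpha_tau'_eq_if_chi_eq[OF conjunct1[OF s'] s(1)])
      show "\<forall>h\<in>O_F. chi (1 + u_E ^ (2 * \<alpha> + 1) * h * s') = chi (1 + u_E ^ (2 * \<alpha> + 1) * h * s)"
        using is_chi_sD(3)[OF conjunct2[OF s'] R_alpha_tau'D(3)[OF conjunct1[OF s']]]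
          is_chi_sD(3)[OF \<theta>_s R_alpha_tau'D(3)[OF s(1)]] by simp
    qed
  qed
qed

end

theorem proposition4p11:
  fixes \<chi> :: "'k::{field,finite} fls \<Rightarrow> complex" and n \<alpha> :: nat
  assumes q_odd: "odd (card (UNIV :: 'k set))"
    and chi_char: "is_character_on E_units \<chi>"
    and n_pos: "n \<ge> 1"
    and level: "has_level \<chi> (2 * n - 1)"
    and alpha: "\<alpha> < n"
  shows "(\<forall>s\<in>R_alpha_tau' (2 * n - 1) \<alpha>.
            \<exists>\<theta>. is_chi_s \<chi> n \<alpha> s \<theta> \<and>
              (\<forall>\<theta>'. is_chi_s \<chi> n \<alpha> s \<theta>' \<longrightarrow> (\<forall>x\<in>FU (2 * \<alpha> + 1). \<theta>' x = \<theta> x)))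
       \<and> (\<forall>\<theta>. is_character_on (FU (2 * \<alpha> + 1)) \<theta> \<longrightarrow>
            ((\<forall>x\<in>FU (min (2 * n) (2 * (2 * \<alpha> + 1))). \<theta> x = \<chi> x) \<or>
             (\<forall>x\<in>FU (min (2 * n) (2 * (2 * \<alpha> + 1))). \<theta> x = \<chi> (tau x))) \<longrightarrow>
            (\<exists>!s. s \<in> R_alpha_tau' (2 * n - 1) \<alpha> \<and> is_chi_s \<chi> n \<alpha> s \<theta>))"
proof -
  interpret odd_level_character \<chi> n
    using two_neq_zero_if_odd_card[OF q_odd] chi_char n_pos level by unfold_locales
  show ?thesis using ex_is_chi_s_unique[OF alpha] ex1_R_alpha_tau'_is_chi_s[OF alpha] by blast
qed

end
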